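(* Let $\mu$ be a probability measure on $[0,1]$ and let $K(n)=\int_0^1(1-x)^{n-1}x\,\mathrm{d}\mu(x)$ for $n\ge1$, $K(\{\infty\})=\mu(\{0\})$. Then for every $\beta\in\mathbf{R}$ there exists a probability measure $\nu_\beta$ on $\mathbf{R}$ such that $$s_{\nu_\beta}(z)\left(e^\beta s_\mu(1-z)-\frac{1-e^\beta}{1-z}\right)=\frac{1}{z(1-z)}\qquad(z\in\mathbf{C}_+),$$ equivalently $s_{\nu_\beta}(z)=\left(-z-e^\beta\int_0^1\frac{zx}{1-z-x}\mathrm{d}\mu(x)\right)^{-1}$, and for all $N\ge0$, $$Z_{N,\beta}=\int_{\mathbf{R}}x^N\,\mathrm{d}\nu_\beta(x).$$
   Context: Renewal process $\tau=\{\tau_i:i\ge0\}$ with law $\mathbf{P}$: $\tau_0=0$, $\tau_n=\eta_1+\dots+\eta_n$, $(\eta_i)$ i.i.d. with law $K$ on $\mathbf{N}\cup\{\infty\}$. For $N\ge1$, $\mathcal{N}_N(\tau)=|\{1,\dots,N\}\cap\tau|$, and the partition function is $Z_{N,\beta}=E_{\mathbf{P}}\left[\exp(\beta\mathcal{N}_N(\tau))\mathbf{1}_{N\in\tau}\right]$, with $Z_{0,\beta}=1$. Stieltjes transform: $s_\mu(z)=\int\frac{\mathrm{d}\mu(x)}{x-z}$, $z\in\mathbf{C}_+$. *)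

theory Defs
  imports "HOL-Probability.Probability"
begin

definition renewal_K :: "real measure \<Rightarrow> enat \<Rightarrow> real" where
  "renewal_K mu t =
     (if t = \<infinity> then measure mu {0}
      else if the_enat t \<ge> 1
           then (\<integral>x. (1 - x) ^ (the_enat t - 1) * x \<partial>mu)
           else 0)"

definition inter_law :: "real measure \<Rightarrow> enat measure" where
  "inter_law mu = density (count_space UNIV) (\<lambda>t. ennreal (renewal_K mu t))"

text \<open>Law P of the i.i.d. sequence of inter-arrival times eta_1, eta_2, ...
  (coordinate 0 is unused).\<close>
definition renewal_space :: "real measure \<Rightarrow> (nat \<Rightarrow> enat) measure" where
  "renewal_space mu = PiM UNIV (\<lambda>_::nat. inter_law mu)"

definition renewal_tau :: "(nat \<Rightarrow> enat) \<Rightarrow> nat \<Rightarrow> enat" where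
  "renewal_tau \<omega> n = (\<Sum>i\<in>{1..n}. \<omega> i)"

definition renewal_count :: "nat \<Rightarrow> (nat \<Rightarrow> enat) \<Rightarrow> nat" where
  "renewal_count N \<omega> = card {k \<in> {1..N}. \<exists>i. renewal_tau \<omega> i = enat k}"

definition partition_fn :: "real measure \<Rightarrow> real \<Rightarrow> nat \<Rightarrow> real" where
  "partition_fn mu \<beta> N =
     (if N = 0 then 1
      else (\<integral>\<omega>. exp (\<beta> * real (renewal_count N \<omega>)) *
                  indicator {\<omega>. \<exists>i. renewal_tau \<omega> i = enat N} \<omega> \<partial>renewal_space mu))"

definition stieltjes :: "real measure \<Rightarrow> complex \<Rightarrow> complex" where
  "stieltjes m z = (\<integral>x. 1 / (complex_of_real x - z) \<partial>m)"

end

theory Submission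
  imports Defs "HOL-Computational_Algebra.Polynomial" "HOL-Complex_Analysis.Cauchy_Integral_Formula"
begin

section \<open>The renewal recursion for the partition function\<close>

definition arrival :: "(nat \<Rightarrow> enat) \<Rightarrow> nat \<Rightarrow> enat" where
  "arrival X n = (\<Sum>i<n. X i)"

definition visits :: "(nat \<Rightarrow> enat) \<Rightarrow> nat \<Rightarrow> bool" where
  "visits X k \<longleftrightarrow> (\<exists>i. arrival X i = enat k)"

definition renewal_weight :: "real \<Rightarrow> nat \<Rightarrow> (nat \<Rightarrow> enat) \<Rightarrow> real" where
  "renewal_weight \<beta> N X =
     exp (\<beta> * real (card {k\<in>{1..N}. visits X k})) * (if visits X N then 1 else 0)"

lemma renewal_tau_eq_arrival: "renewal_tau \<omega> n = arrival (\<lambda>i. \<omega> (Suc i)) n"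
  unfolding renewal_tau_def arrival_def by (induction n) (auto simp: add.commute)

lemma arrival_0 [simp]: "arrival X 0 = 0"
  by (simp add: arrival_def)

lemma arrival_Suc: "arrival X (Suc i) = arrival X i + X i"
  by (simp add: arrival_def)

lemma arrival_case_nat_Suc: "arrival (case_nat y X) (Suc i) = y + arrival X i"
  by (induction i) (auto simp: arrival_Suc add.assoc)

lemma visits_0 [simp]: "visits X 0"
  unfolding visits_def by (rule exI[of _ 0]) (simp add: zero_enat_def)

lemma visits_case_nat_enat:
  "visits (case_nat (enat n) X) k \<longleftrightarrow> k = 0 \<or> (n \<le> k \<and> visits X (k - n))"
proof
  assume "visits (case_nat (enat n) X) k"
  then obtain i where i: "arrival (case_nat (enat n) X) i = enat k"
    by (auto simp: visits_def)
  show "k = 0 \<or> (n \<le> k \<and> visits X (k - n))"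
  proof (cases i)
    case 0
    then show ?thesis using i by (simp add: zero_enat_def)
  next
    case (Suc j)
    with i have sum: "enat n + arrival X j = enat k" by (simp add: arrival_case_nat_Suc)
    then obtain m where m: "arrival X j = enat m" by (cases "arrival X j") auto
    with sum have "n + m = k" by simp
    with m show ?thesis by (auto simp: visits_def)
  qed
next
  assume "k = 0 \<or> (n \<le> k \<and> visits X (k - n))"
  then show "visits (case_nat (enat n) X) k"
  proof
    assume k: "n \<le> k \<and> visits X (k - n)"
    then obtain j where "arrival X j = enat (k - n)" by (auto simp: visits_def)
    then have "arrival (case_nat (enat n) X) (Suc j) = enat k"
      using k by (simp add: arrival_case_nat_Suc)
    then show ?thesis by (auto simp: visits_def)
  qed simp
qed

lemma visits_case_nat_infinity: "visits (case_nat \<infinity> X) k \<longleftrightarrow> k = 0"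
proof
  assume "visits (case_nat \<infinity> X) k"
  then obtain i where "arrival (case_nat \<infinity> X) i = enat k" by (auto simp: visits_def)
  then show "k = 0" by (cases i) (auto simp: arrival_case_nat_Suc zero_enat_def)
qed simp

lemma card_visits_case_nat_enat:
  assumes "1 \<le> n" "n \<le> N"
  shows "card {k\<in>{1..N}. visits (case_nat (enat n) X) k} = Suc (card {j\<in>{1..N-n}. visits X j})"
proof -
  have "{k\<in>{1..N}. visits (case_nat (enat n) X) k} = (\<lambda>j. j + n) ` {j\<in>{0..N-n}. visits X j}"
  proof (intro set_eqI iffI)
    fix k assume "k \<in> {k\<in>{1..N}. visits (case_nat (enat n) X) k}"
    then have "k \<in> {1..N}" "n \<le> k" "visits X (k - n)"
      using assms by (auto simp: visits_case_nat_enat)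
    then show "k \<in> (\<lambda>j. j + n) ` {j\<in>{0..N-n}. visits X j}"
      by (intro image_eqI[of _ _ "k - n"]) auto
  qed (use assms in \<open>auto simp: visits_case_nat_enat\<close>)
  then have "card {k\<in>{1..N}. visits (case_nat (enat n) X) k} = card {j\<in>{0..N-n}. visits X j}"
    by (simp add: card_image inj_on_def)
  also have "{j\<in>{0..N-n}. visits X j} = insert 0 {j\<in>{1..N-n}. visits X j}"
    by auto
  finally show ?thesis by simp
qed

lemma renewal_weight_nonneg: "0 \<le> renewal_weight \<beta> N X"
  by (simp add: renewal_weight_def)

lemma renewal_weight_case_nat_enat:
  assumes "1 \<le> n" "n \<le> N"
  shows "renewal_weight \<beta> N (case_nat (enat n) X) =
    exp \<beta> * (if n = N then 1 else renewal_weight \<beta> (N - n) X)"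
  using card_visits_case_nat_enat[OF assms, of X] assms
  by (auto simp: renewal_weight_def visits_case_nat_enat distrib_left exp_add)

lemma renewal_weight_case_nat_beyond:
  "N < n \<Longrightarrow> 1 \<le> N \<Longrightarrow> renewal_weight \<beta> N (case_nat (enat n) X) = 0"
  by (simp add: renewal_weight_def visits_case_nat_enat)

lemma renewal_weight_case_nat_infinity:
  "1 \<le> N \<Longrightarrow> renewal_weight \<beta> N (case_nat \<infinity> X) = 0"
  by (simp add: renewal_weight_def visits_case_nat_infinity)

lemma measurable_arrival:
  assumes "sets M = sets (count_space UNIV)"
  shows "(\<lambda>X. arrival X i) \<in> measurable (PiM UNIV (\<lambda>_. M)) (count_space UNIV)"
proof (induction i)
  case (Suc i)
  have "(\<lambda>X. X i) \<in> measurable (PiM UNIV (\<lambda>_. M)) M"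
    by (rule measurable_component_singleton) simp
  then have "(\<lambda>X. X i) \<in> measurable (PiM UNIV (\<lambda>_. M)) (count_space UNIV)"
    using measurable_cong_sets[OF refl assms] by blast
  with Suc have "(\<lambda>X. (arrival X i, X i)) \<in>
      measurable (PiM UNIV (\<lambda>_. M)) (count_space UNIV \<Otimes>\<^sub>M count_space UNIV)"
    by (rule measurable_Pair)
  then have "(\<lambda>X. (arrival X i, X i)) \<in>
      measurable (PiM UNIV (\<lambda>_. M)) (count_space (UNIV :: (enat \<times> enat) set))"
    by (simp add: pair_measure_countable)
  from measurable_comp[OF this, of "\<lambda>(a, b). a + b" "count_space UNIV"]
  show ?case by (simp add: arrival_Suc o_def)
qed simp

lemma borel_measurable_renewal_weight:
  assumes "sets M = sets (count_space UNIV)"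
  shows "renewal_weight \<beta> N \<in> borel_measurable (PiM UNIV (\<lambda>_. M))"
proof -
  have [measurable]: "Measurable.pred (PiM UNIV (\<lambda>_. M)) (\<lambda>X. visits X k)" for k
    unfolding visits_def using measurable_arrival[OF assms]
    by (intro pred_intros_countable pred_eq_const1) auto
  have "renewal_weight \<beta> N = (\<lambda>X. exp (\<beta> * (\<Sum>k\<in>{1..N}. if visits X k then 1 else 0)) *
      (if visits X N then 1 else 0))"
    by (simp add: fun_eq_iff renewal_weight_def sum.If_cases Int_def)
  then show ?thesis by simp
qed

locale unit_interval_prob =
  fixes mu :: "real measure"
  assumes prob: "prob_space mu"
    and sets_mu [measurable_cong]: "sets mu = sets borel"
    and on_unit_interval: "emeasure mu {0..1} = 1"
begin

sublocale m: prob_space mu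
  by (rule prob)

lemma AE_in_unit_interval: "AE x in mu. 0 \<le> x \<and> x \<le> 1"
proof -
  have "measure mu {0..1} = 1"
    using on_unit_interval by (simp add: m.emeasure_eq_measure)
  then have "AE x in mu. x \<in> {0..1}"
    by (rule m.AE_prob_1)
  then show ?thesis by simp
qed

lemma integrable_bounded_on_unit_interval:
  fixes f :: "real \<Rightarrow> 'b::{banach, second_countable_topology}"
  assumes "f \<in> borel_measurable borel" "\<And>x. 0 \<le> x \<Longrightarrow> x \<le> 1 \<Longrightarrow> norm (f x) \<le> B"
  shows "integrable mu f"
proof (rule Bochner_Integration.integrable_bound)
  show "integrable mu (\<lambda>_. B)" by simp
  show "f \<in> borel_measurable mu"
    using assms(1) by (simp add: measurable_cong_sets[OF sets_mu refl])
  show "AE x in mu. norm (f x) \<le> norm B"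
    using AE_in_unit_interval by eventually_elim (use assms(2) in force)
qed

lemma renewal_K_simps:
  "renewal_K mu \<infinity> = measure mu {0}"
  "renewal_K mu (enat 0) = 0"
  "renewal_K mu (enat (Suc m)) = (\<integral>x. (1 - x) ^ m * x \<partial>mu)"
  by (auto simp: renewal_K_def)

lemma integrable_renewal_K_integrand: "integrable mu (\<lambda>x. (1 - x) ^ m * x)"
  by (rule integrable_bounded_on_unit_interval[where B=1])
     (auto simp: abs_mult power_le_one mult_le_one)

lemma renewal_K_bounds: "0 \<le> renewal_K mu t" "renewal_K mu t \<le> 1"
proof -
  have "0 \<le> (\<integral>x. (1 - x) ^ m * x \<partial>mu) \<and> (\<integral>x. (1 - x) ^ m * x \<partial>mu) \<le> 1" for m
  proof
    show "0 \<le> (\<integral>x. (1 - x) ^ m * x \<partial>mu)"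
      by (rule integral_nonneg_AE) (use AE_in_unit_interval in \<open>eventually_elim, auto\<close>)
    have "AE x in mu. (1 - x) ^ m * x \<le> 1"
      using AE_in_unit_interval by eventually_elim (auto intro!: mult_le_one power_le_one)
    then have "(\<integral>x. (1 - x) ^ m * x \<partial>mu) \<le> (\<integral>x. 1 \<partial>mu)"
      by (intro integral_mono_AE integrable_renewal_K_integrand) auto
    then show "(\<integral>x. (1 - x) ^ m * x \<partial>mu) \<le> 1"
      by (simp add: m.prob_space)
  qed
  then show "0 \<le> renewal_K mu t" "renewal_K mu t \<le> 1"
    by (cases t; auto simp: renewal_K_def)+
qed

lemma nn_integral_count_space_enat:
  "(\<integral>\<^sup>+t. g t \<partial>count_space UNIV) = g \<infinity> + (\<integral>\<^sup>+n. g (enat n) \<partial>count_space UNIV)"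
proof -
  have "(\<integral>\<^sup>+t. g t \<partial>count_space UNIV) =
      (\<integral>\<^sup>+t. g t * indicator {\<infinity>} t + g t * indicator (range enat) t \<partial>count_space UNIV)"
    by (intro nn_integral_cong) (auto simp: indicator_def)
  also have "\<dots> = (\<integral>\<^sup>+t. g t * indicator {\<infinity>} t \<partial>count_space UNIV) +
      (\<integral>\<^sup>+t. g t \<partial>count_space (range enat))"
    by (subst nn_integral_add) (auto simp: nn_integral_count_space_indicator)
  also have "(\<integral>\<^sup>+t. g t * indicator {\<infinity>} t \<partial>count_space UNIV) = g \<infinity>"
    by (subst nn_integral_count_space'[of "{\<infinity>}"]) auto
  also have "(\<integral>\<^sup>+t. g t \<partial>count_space (range enat)) = (\<integral>\<^sup>+n. g (enat n) \<partial>count_space UNIV)"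
    by (rule nn_integral_bij_count_space[symmetric]) (auto simp: bij_betw_def inj_on_def)
  finally show ?thesis .
qed

lemma geometric_first_arrival_sums:
  fixes x :: real
  assumes "0 < x" "x \<le> 1"
  shows "(\<lambda>n. if n = 0 then 0 else (1 - x) ^ (n - 1) * x) sums 1"
proof -
  have "(\<lambda>n. (1 - x) ^ n) sums (1 / (1 - (1 - x)))"
    by (rule geometric_sums) (use assms in auto)
  then have "(\<lambda>n. (1 - x) ^ n * x) sums (1 / (1 - (1 - x)) * x)"
    by (rule sums_mult2)
  then have "(\<lambda>n. (1 - x) ^ n * x) sums 1"
    using assms by simp
  then have "(\<lambda>n. (\<lambda>n. if n = 0 then 0 else (1 - x) ^ (n - 1) * x) (Suc n)) sums 1"
    by simp
  from sums_Suc_iff[THEN iffD1, OF this] show ?thesis by simp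
qed

lemma nn_integral_renewal_K: "(\<integral>\<^sup>+t. ennreal (renewal_K mu t) \<partial>count_space UNIV) = 1"
proof -
  define g where "g n x = (if n = 0 then 0 else (1 - x) ^ (n - 1) * x)" for n :: nat and x :: real
  have "ennreal (renewal_K mu (enat n)) = (\<integral>\<^sup>+x. ennreal (g n x) \<partial>mu)" for n
  proof (cases n)
    case (Suc m)
    have "AE x in mu. 0 \<le> (1 - x) ^ m * x"
      using AE_in_unit_interval by eventually_elim auto
    then show ?thesis
      using Suc nn_integral_eq_integral[OF integrable_renewal_K_integrand]
      by (simp add: renewal_K_simps g_def)
  qed (simp add: g_def renewal_K_simps)
  then have "(\<integral>\<^sup>+n. ennreal (renewal_K mu (enat n)) \<partial>count_space UNIV) =
      (\<Sum>n. \<integral>\<^sup>+x. ennreal (g n x) \<partial>mu)"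
    by (simp add: nn_integral_count_space_nat)
  also have "\<dots> = (\<integral>\<^sup>+x. (\<Sum>n. ennreal (g n x)) \<partial>mu)"
    by (rule nn_integral_suminf[symmetric]) (simp add: g_def measurable_cong_sets[OF sets_mu refl])
  also have "\<dots> = (\<integral>\<^sup>+x. indicator {0<..1} x \<partial>mu)"
  proof (rule nn_integral_cong_AE)
    show "AE x in mu. (\<Sum>n. ennreal (g n x)) = indicator {0<..1} x"
      using AE_in_unit_interval
    proof eventually_elim
      case (elim x)
      show ?case
      proof (cases "x = 0")
        case True
        then have "(\<lambda>n. ennreal (g n x)) = (\<lambda>n. 0)"
          by (auto simp: g_def fun_eq_iff)
        then show ?thesis using True by simp
      next
        case False
        then have "(\<lambda>n. g n x) sums 1"
          unfolding g_def using elim by (intro geometric_first_arrival_sums) auto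
        then have "(\<Sum>n. ennreal (g n x)) = ennreal 1"
          by (rule suminf_ennreal_eq[rotated]) (use elim in \<open>auto simp: g_def\<close>)
        then show ?thesis using False elim by simp
      qed
    qed
  qed
  also have "\<dots> = emeasure mu {0<..1}"
    by (simp add: sets_mu)
  finally have "(\<integral>\<^sup>+t. ennreal (renewal_K mu t) \<partial>count_space UNIV) =
      emeasure mu {0} + emeasure mu {0<..1}"
    by (simp add: nn_integral_count_space_enat renewal_K_simps m.emeasure_eq_measure)
  also have "\<dots> = emeasure mu {0..1}"
    by (subst plus_emeasure) (auto simp: sets_mu intro!: arg_cong[where f="emeasure mu"])
  finally show ?thesis
    using on_unit_interval by simp
qed

lemma prob_space_inter_law: "prob_space (inter_law mu)"
  by (rule prob_spaceI) (simp add: inter_law_def emeasure_density nn_integral_renewal_K)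

lemma sets_inter_law: "sets (inter_law mu) = sets (count_space UNIV)"
  by (simp add: inter_law_def)

lemma prob_space_renewal_space: "prob_space (renewal_space mu)"
  unfolding renewal_space_def by (rule prob_space_PiM) (rule prob_space_inter_law)

lemma borel_measurable_renewal_weight_renewal_space [measurable]:
  "renewal_weight \<beta> N \<in> borel_measurable (renewal_space mu)"
  unfolding renewal_space_def by (rule borel_measurable_renewal_weight[OF sets_inter_law])

lemma measurable_shift_renewal_space:
  "(\<lambda>\<omega>. \<lambda>i. \<omega> (Suc i)) \<in> measurable (renewal_space mu) (renewal_space mu)"
  unfolding renewal_space_def
  by (rule measurable_PiM_single') (auto intro: measurable_component_singleton simp: space_PiM)

text \<open>Conditioning on the first inter-arrival time: the sequence space is the product of the
  first coordinate with a copy of itself.\<close>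

lemma nn_integral_renewal_space_first_step:
  assumes h [measurable]: "h \<in> borel_measurable (renewal_space mu)"
  shows "(\<integral>\<^sup>+\<omega>. h \<omega> \<partial>renewal_space mu) =
    (\<integral>\<^sup>+x. \<integral>\<^sup>+X. h (case_nat x X) \<partial>renewal_space mu \<partial>inter_law mu)"
proof -
  interpret I: prob_space "inter_law mu" by (rule prob_space_inter_law)
  interpret R: sigma_finite_measure "\<Pi>\<^sub>M i::nat\<in>UNIV. inter_law mu"
    using prob_space_renewal_space unfolding renewal_space_def by (rule prob_space_imp_sigma_finite)
  interpret S: sequence_space "inter_law mu"
    by unfold_locales
  have "(\<lambda>X. case_nat (fst X) (snd X)) \<in> measurable (inter_law mu \<Otimes>\<^sub>M (\<Pi>\<^sub>M i::nat\<in>UNIV. inter_law mu))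
      (\<Pi>\<^sub>M i::nat\<in>UNIV. inter_law mu)"
    by (rule measurable_case_nat'[OF measurable_fst measurable_snd])
  from measurable_comp[OF this, of h]
  have hc: "(\<lambda>X. h (case_nat (fst X) (snd X))) \<in>
      borel_measurable (inter_law mu \<Otimes>\<^sub>M (\<Pi>\<^sub>M i::nat\<in>UNIV. inter_law mu))"
    using h by (simp add: renewal_space_def o_def)
  have "(\<integral>\<^sup>+\<omega>. h \<omega> \<partial>renewal_space mu) =
      (\<integral>\<^sup>+X. h (case_nat (fst X) (snd X)) \<partial>(inter_law mu \<Otimes>\<^sub>M (\<Pi>\<^sub>M i::nat\<in>UNIV. inter_law mu)))"
    using h unfolding renewal_space_def
    by (subst S.PiM_iter[symmetric]) (simp add: nn_integral_distr split_beta')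
  also have "\<dots> = (\<integral>\<^sup>+x. \<integral>\<^sup>+X. h (case_nat x X) \<partial>(\<Pi>\<^sub>M i::nat\<in>UNIV. inter_law mu) \<partial>inter_law mu)"
    using R.nn_integral_fst[OF hc] by simp
  finally show ?thesis by (simp add: renewal_space_def)
qed

lemma borel_measurable_renewal_weight_shift [measurable]:
  "(\<lambda>\<omega>. renewal_weight \<beta> N (\<lambda>i. \<omega> (Suc i))) \<in> borel_measurable (renewal_space mu)"
  using measurable_comp[OF measurable_shift_renewal_space borel_measurable_renewal_weight_renewal_space]
  by (simp add: o_def)

lemma nn_integral_renewal_weight_shift:
  "(\<integral>\<^sup>+\<omega>. renewal_weight \<beta> N (\<lambda>i. \<omega> (Suc i)) \<partial>renewal_space mu) =
    (\<integral>\<^sup>+X. renewal_weight \<beta> N X \<partial>renewal_space mu)"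
proof -
  interpret I: prob_space "inter_law mu" by (rule prob_space_inter_law)
  show ?thesis
    by (subst nn_integral_renewal_space_first_step) (simp_all add: I.emeasure_space_1)
qed

lemma nn_integral_renewal_weight_recursion:
  assumes "1 \<le> N"
  shows "(\<integral>\<^sup>+X. renewal_weight \<beta> N X \<partial>renewal_space mu) =
    (\<Sum>n\<in>{1..N}. ennreal (exp \<beta> * renewal_K mu (enat n)) *
        (if n = N then 1 else (\<integral>\<^sup>+X. renewal_weight \<beta> (N - n) X \<partial>renewal_space mu)))"
proof -
  interpret S: prob_space "renewal_space mu" by (rule prob_space_renewal_space)
  define G where "G x = (\<integral>\<^sup>+X. renewal_weight \<beta> N (case_nat x X) \<partial>renewal_space mu)" for x
  have G_enat: "G (enat n) = ennreal (exp \<beta>) *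
      (if n = N then 1 else (\<integral>\<^sup>+X. renewal_weight \<beta> (N - n) X \<partial>renewal_space mu))"
    if "n \<in> {1..N}" for n
    using that by (auto simp: G_def renewal_weight_case_nat_enat ennreal_mult renewal_weight_nonneg
        nn_integral_cmult S.emeasure_space_1)
  have G_zero: "ennreal (renewal_K mu x) * G x = 0" if x: "x \<notin> enat ` {1..N}" for x
  proof (cases x)
    case (enat n)
    then consider "n = 0" | "N < n" using x by force
    then show ?thesis
      using enat assms by cases (auto simp: renewal_K_simps G_def renewal_weight_case_nat_beyond)
  qed (use assms in \<open>simp add: G_def renewal_weight_case_nat_infinity\<close>)
  have "(\<integral>\<^sup>+X. renewal_weight \<beta> N X \<partial>renewal_space mu) = (\<integral>\<^sup>+x. G x \<partial>inter_law mu)"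
    unfolding G_def by (rule nn_integral_renewal_space_first_step) simp
  also have "\<dots> = (\<integral>\<^sup>+x. ennreal (renewal_K mu x) * G x \<partial>count_space UNIV)"
    unfolding inter_law_def by (rule nn_integral_density) simp_all
  also have "\<dots> = (\<Sum>x\<in>enat ` {1..N}. ennreal (renewal_K mu x) * G x)"
    using G_zero by (intro nn_integral_count_space') auto
  also have "\<dots> = (\<Sum>n\<in>{1..N}. ennreal (renewal_K mu (enat n)) * G (enat n))"
    by (subst sum.reindex) (auto simp: inj_on_def)
  also have "\<dots> = (\<Sum>n\<in>{1..N}. ennreal (exp \<beta> * renewal_K mu (enat n)) *
      (if n = N then 1 else (\<integral>\<^sup>+X. renewal_weight \<beta> (N - n) X \<partial>renewal_space mu)))"
    by (intro sum.cong refl) (simp add: G_enat ennreal_mult renewal_K_bounds mult_ac)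
  finally show ?thesis .
qed

lemma nn_integral_renewal_weight_finite:
  "1 \<le> N \<Longrightarrow> (\<integral>\<^sup>+X. renewal_weight \<beta> N X \<partial>renewal_space mu) < \<infinity>"
proof (induction N rule: less_induct)
  case (less N)
  then show ?case
    by (subst nn_integral_renewal_weight_recursion)
       (auto simp: ennreal_sum_less_top ennreal_mult_less_top)
qed

lemma partition_fn_eq_nn_integral:
  "ennreal (partition_fn mu \<beta> N) =
    (if N = 0 then 1 else (\<integral>\<^sup>+X. renewal_weight \<beta> N X \<partial>renewal_space mu))"
proof (cases "N = 0")
  case False
  have "partition_fn mu \<beta> N = (\<integral>\<omega>. renewal_weight \<beta> N (\<lambda>i. \<omega> (Suc i)) \<partial>renewal_space mu)"
    using False unfolding partition_fn_def if_not_P[OF False]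
    by (intro Bochner_Integration.integral_cong refl)
       (simp add: renewal_weight_def renewal_count_def visits_def renewal_tau_eq_arrival indicator_def)
  also have "\<dots> = enn2real (\<integral>\<^sup>+X. renewal_weight \<beta> N X \<partial>renewal_space mu)"
    by (simp add: integral_eq_nn_integral renewal_weight_nonneg nn_integral_renewal_weight_shift)
  finally show ?thesis
    using False nn_integral_renewal_weight_finite[of N \<beta>] by (simp add: ennreal_enn2real_if)
qed (simp add: partition_fn_def)

lemma partition_fn_nonneg: "0 \<le> partition_fn mu \<beta> N"
  by (auto simp: partition_fn_def intro!: integral_nonneg_AE)

lemma partition_fn_recursion:
  assumes "1 \<le> N"
  shows "partition_fn mu \<beta> N =
    (\<Sum>n\<in>{1..N}. exp \<beta> * renewal_K mu (enat n) * partition_fn mu \<beta> (N - n))"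
proof -
  have "ennreal (partition_fn mu \<beta> N) = (\<integral>\<^sup>+X. renewal_weight \<beta> N X \<partial>renewal_space mu)"
    using assms by (simp add: partition_fn_eq_nn_integral)
  also have "\<dots> = (\<Sum>n\<in>{1..N}. ennreal (exp \<beta> * renewal_K mu (enat n)) *
      ennreal (partition_fn mu \<beta> (N - n)))"
    unfolding nn_integral_renewal_weight_recursion[OF assms]
    by (intro sum.cong refl) (auto simp: partition_fn_eq_nn_integral)
  also have "\<dots> = ennreal (\<Sum>n\<in>{1..N}. exp \<beta> * renewal_K mu (enat n) * partition_fn mu \<beta> (N - n))"
    by (simp add: ennreal_mult renewal_K_bounds partition_fn_nonneg sum_ennreal[symmetric] sum_nonneg)
  finally show ?thesis
    by (subst (asm) ennreal_inj) (auto intro!: sum_nonneg mult_nonneg_nonneg partition_fn_nonneg renewal_K_bounds)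
qed

end

section \<open>Partial fractions of a rational Pick function\<close>

text \<open>For finitely many poles \<open>t\<^sub>k\<close> with positive weights \<open>w\<^sub>k\<close>, the real function
  \<open>F x = x - a - \<Sum>\<^sub>k w\<^sub>k / (x - t\<^sub>k)\<close> is increasing between consecutive poles and runs from
  \<open>-\<infinity>\<close> to \<open>+\<infinity>\<close> there, so it has exactly one root in each of the \<open>|K| + 1\<close> gaps; these
  roots are the poles of \<open>-1/F\<close>, whose residues \<open>1/F'(l)\<close> are positive and sum to \<open>1\<close>.\<close>

lemma degree_prod_linear:
  fixes c :: "'a \<Rightarrow> 'b::idom"
  shows "finite A \<Longrightarrow> degree (\<Prod>x\<in>A. [:- c x, 1:]) = card A"
  by (subst degree_prod_sum_eq) auto

lemma lead_coeff_prod_linear: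
  fixes c :: "'a \<Rightarrow> 'b::idom"
  shows "lead_coeff (\<Prod>x\<in>A. [:- c x, 1:]) = 1"
  by (simp add: lead_coeff_prod)

locale rational_pick =
  fixes K :: "'i set" and t w :: "'i \<Rightarrow> real" and a M :: real
  assumes finite_K: "finite K" and inj_t: "inj_on t K"
    and weight_pos: "\<And>k. k \<in> K \<Longrightarrow> 0 < w k"
    and pole_bound: "\<And>k. k \<in> K \<Longrightarrow> \<bar>t k\<bar> \<le> M" and M_nonneg: "0 \<le> M"
begin

definition F :: "real \<Rightarrow> real" where
  "F x = x - a - (\<Sum>k\<in>K. w k / (x - t k))"

definition bnd :: real where
  "bnd = M + 1 + \<bar>a\<bar> + (\<Sum>k\<in>K. w k)"

lemma sum_weight_nonneg: "0 \<le> (\<Sum>k\<in>K. w k)"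
  using weight_pos by (intro sum_nonneg) (simp add: less_imp_le)

lemma F_neg_far_left:
  assumes "x \<le> - bnd"
  shows "F x < 0"
proof -
  have "- w k \<le> w k / (x - t k)" if "k \<in> K" for k
  proof -
    have "1 \<le> t k - x"
      using pole_bound[OF that] assms sum_weight_nonneg unfolding bnd_def by linarith
    then have "w k / (t k - x) \<le> w k"
      using weight_pos[OF that] by (simp add: divide_le_eq)
    moreover have "w k / (x - t k) = - (w k / (t k - x))"
      by (metis minus_diff_eq minus_divide_right)
    ultimately show ?thesis by linarith
  qed
  then have "- (\<Sum>k\<in>K. w k) \<le> (\<Sum>k\<in>K. w k / (x - t k))"
    by (subst sum_negf[symmetric]) (rule sum_mono)
  then show ?thesis
    using assms sum_weight_nonneg M_nonneg unfolding F_def bnd_def by linarith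
qed

lemma F_pos_far_right:
  assumes "bnd \<le> x"
  shows "0 < F x"
proof -
  have "w k / (x - t k) \<le> w k" if "k \<in> K" for k
  proof -
    have "1 \<le> x - t k"
      using pole_bound[OF that] assms sum_weight_nonneg unfolding bnd_def by linarith
    then show ?thesis
      using weight_pos[OF that] by (simp add: divide_le_eq)
  qed
  then have "(\<Sum>k\<in>K. w k / (x - t k)) \<le> (\<Sum>k\<in>K. w k)"
    by (rule sum_mono)
  then show ?thesis
    using assms sum_weight_nonneg M_nonneg unfolding F_def bnd_def by linarith
qed

lemma isCont_F: "x \<notin> t ` K \<Longrightarrow> isCont F x"
  unfolding F_def by (intro continuous_intros) force+

lemma has_field_derivative_F:
  assumes "x \<notin> t ` K"
  shows "(F has_field_derivative (1 + (\<Sum>k\<in>K. w k / (x - t k)\<^sup>2))) (at x)"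
proof -
  have "((\<lambda>y. w k / (y - t k)) has_field_derivative (- (w k / (x - t k)\<^sup>2))) (at x)"
    if "k \<in> K" for k
    using assms that by (auto intro!: derivative_eq_intros simp: power2_eq_square field_simps)
  then have "(F has_field_derivative (1 - 0 - (\<Sum>k\<in>K. - (w k / (x - t k)\<^sup>2)))) (at x)"
    unfolding F_def by (intro DERIV_diff DERIV_ident DERIV_const DERIV_sum)
  then show ?thesis
    by (simp add: sum_negf)
qed

lemma F_near_pole:
  assumes "k \<in> K"
  shows "eventually (\<lambda>x. F x < 0) (at_right (t k))" "eventually (\<lambda>x. 0 < F x) (at_left (t k))"
proof -
  define g where "g x = x - a - (\<Sum>j\<in>K-{k}. w j / (x - t j))" for x
  have F_eq: "F = (\<lambda>x. g x + - (w k * inverse (x - t k)))"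
    using assms finite_K by (simp add: fun_eq_iff F_def g_def sum.remove divide_inverse)
  have "isCont g (t k)"
    unfolding g_def using inj_t assms by (intro continuous_intros) (auto simp: inj_on_def)
  then have g_lim: "(g \<longlongrightarrow> g (t k)) (at_right (t k))" "(g \<longlongrightarrow> g (t k)) (at_left (t k))"
    by (simp_all add: isCont_def filterlim_at_split)
  have shift: "filterlim (\<lambda>x. x - t k) (at_right 0) (at_right (t k))"
    "filterlim (\<lambda>x. x - t k) (at_left 0) (at_left (t k))"
    by (auto intro!: filterlim_at_withinI tendsto_eq_intros simp: eventually_at_filter)
  have "filterlim (\<lambda>x. w k * inverse (x - t k)) at_top (at_right (t k))"
    using filterlim_compose[OF filterlim_inverse_at_top_right shift(1)]
    by (rule filterlim_tendsto_pos_mult_at_top[OF tendsto_const weight_pos[OF assms]])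
  then have "filterlim F at_bot (at_right (t k))"
    unfolding F_eq filterlim_tendsto_add_at_bot_iff[OF g_lim(1)]
    by (simp add: filterlim_uminus_at_top[symmetric])
  then show "eventually (\<lambda>x. F x < 0) (at_right (t k))"
    by (simp add: filterlim_at_bot_dense)
  have "filterlim (\<lambda>x. w k * inverse (x - t k)) at_bot (at_left (t k))"
    using filterlim_compose[OF filterlim_inverse_at_bot_neg shift(2)]
    by (rule filterlim_tendsto_pos_mult_at_bot[OF tendsto_const weight_pos[OF assms]])
  then have "filterlim F at_top (at_left (t k))"
    unfolding F_eq
    by (intro filterlim_tendsto_add_at_top[OF g_lim(2)]) (simp add: filterlim_uminus_at_bot[symmetric])
  then show "eventually (\<lambda>x. 0 < F x) (at_left (t k))"
    by (simp add: filterlim_at_top_dense)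
qed

lemma F_root_between:
  assumes "l < r" "\<And>k. k \<in> K \<Longrightarrow> t k \<notin> {l<..<r}"
    "eventually (\<lambda>x. F x < 0) (at_right l)" "eventually (\<lambda>x. 0 < F x) (at_left r)"
  shows "\<exists>x\<in>{l<..<r}. F x = 0"
proof -
  define m where "m = (l + r) / 2"
  have m: "l < m" "m < r"
    using assms(1) by (auto simp: m_def)
  obtain b where b: "l < b" "\<And>y. l < y \<Longrightarrow> y < b \<Longrightarrow> F y < 0"
    using assms(3) by (auto simp: eventually_at_right_field)
  obtain c where c: "c < r" "\<And>y. y < r \<Longrightarrow> c < y \<Longrightarrow> 0 < F y"
    using assms(4) by (auto simp: eventually_at_left_field)
  define p where "p = (l + min b m) / 2"
  define q where "q = (r + max c m) / 2"
  have p: "l < p" "p < m" "F p < 0"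
    using b m by (auto simp: p_def intro!: b(2))
  have q: "m < q" "q < r" "0 < F q"
    using c m by (auto simp: q_def intro!: c(2))
  have "continuous_on {p..q} F"
    using assms(2) p q by (intro continuous_at_imp_continuous_on ballI isCont_F) force
  then obtain x where "p \<le> x" "x \<le> q" "F x = 0"
    using IVT'[of F p 0 q] p q by auto
  then show ?thesis
    using p q by (intro bexI[of _ x]) auto
qed

definition lo :: real where "lo = - bnd - 1"
definition hi :: real where "hi = bnd + 1"

text \<open>Each gap starts at \<open>lo\<close> or at a pole and ends at the next pole or at \<open>hi\<close>.\<close>

definition gap_starts :: "real set" where "gap_starts = insert lo (t ` K)"
definition gap_end :: "real \<Rightarrow> real" where "gap_end s = Min {p \<in> insert hi gap_starts. s < p}"
definition root_in_gap :: "real \<Rightarrow> real" where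
  "root_in_gap s = (SOME x. x \<in> {s<..<gap_end s} \<and> F x = 0)"
definition roots :: "real set" where "roots = root_in_gap ` gap_starts"

lemma pole_in_lo_hi: "k \<in> K \<Longrightarrow> lo < t k \<and> t k < hi"
  using pole_bound[of k] sum_weight_nonneg unfolding lo_def hi_def bnd_def by (auto simp: abs_le_iff)

lemma lo_less_hi: "lo < hi"
  using M_nonneg sum_weight_nonneg unfolding lo_def hi_def bnd_def by linarith

lemma gap_starts_bounds: "s \<in> gap_starts \<Longrightarrow> lo \<le> s \<and> s < hi"
  using pole_in_lo_hi lo_less_hi unfolding gap_starts_def by force

lemma gap_end:
  assumes "s \<in> gap_starts"
  shows "gap_end s \<in> insert hi gap_starts" "s < gap_end s"
    "\<And>p. p \<in> insert hi gap_starts \<Longrightarrow> s < p \<Longrightarrow> gap_end s \<le> p"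
proof -
  have "finite {p \<in> insert hi gap_starts. s < p}" "{p \<in> insert hi gap_starts. s < p} \<noteq> {}"
    using gap_starts_bounds[OF assms] finite_K by (auto simp: gap_starts_def)
  then show "gap_end s \<in> insert hi gap_starts" "s < gap_end s"
    "\<And>p. p \<in> insert hi gap_starts \<Longrightarrow> s < p \<Longrightarrow> gap_end s \<le> p"
    unfolding gap_end_def using Min_in Min_le by auto
qed

lemma pole_notin_gap: "s \<in> gap_starts \<Longrightarrow> k \<in> K \<Longrightarrow> t k \<notin> {s<..<gap_end s}"
  using gap_end(3)[of s "t k"] by (force simp: gap_starts_def)

lemma F_at_gap_start: "s \<in> gap_starts \<Longrightarrow> eventually (\<lambda>x. F x < 0) (at_right s)"
proof (cases "s = lo")
  case True
  have "eventually (\<lambda>x. x < - bnd) (at_right s)"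
    unfolding eventually_at_right_field using True by (intro exI[of _ "- bnd"]) (auto simp: lo_def)
  then show ?thesis
    by eventually_elim (rule F_neg_far_left, simp)
qed (use F_near_pole(1) in \<open>auto simp: gap_starts_def\<close>)

lemma F_at_gap_end:
  assumes "s \<in> gap_starts"
  shows "eventually (\<lambda>x. 0 < F x) (at_left (gap_end s))"
proof -
  have "gap_end s \<noteq> lo"
    using gap_end(2)[OF assms] gap_starts_bounds[OF assms] by auto
  then consider "gap_end s = hi" | k where "k \<in> K" "gap_end s = t k"
    using gap_end(1)[OF assms] by (auto simp: gap_starts_def)
  then show ?thesis
  proof cases
    case 1
    have "eventually (\<lambda>x. bnd < x) (at_left (gap_end s))"
      unfolding eventually_at_left_field using 1 by (intro exI[of _ bnd]) (auto simp: hi_def)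
    then show ?thesis
      by eventually_elim (rule F_pos_far_right, simp)
  qed (use F_near_pole(2) in auto)
qed

lemma root_in_gap: 
  assumes "s \<in> gap_starts"
  shows "root_in_gap s \<in> {s<..<gap_end s}" "F (root_in_gap s) = 0"
proof -
  have "\<exists>x\<in>{s<..<gap_end s}. F x = 0"
    using gap_end[OF assms] pole_notin_gap[OF assms] F_at_gap_start[OF assms] F_at_gap_end[OF assms]
    by (intro F_root_between) auto
  then show "root_in_gap s \<in> {s<..<gap_end s}" "F (root_in_gap s) = 0"
    unfolding root_in_gap_def by (metis (mono_tags, lifting) someI_ex)+
qed

lemma strict_mono_on_root_in_gap: "strict_mono_on gap_starts root_in_gap"
proof (rule strict_mono_onI)
  fix s s' assume s: "s \<in> gap_starts" "s' \<in> gap_starts" "s < s'"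
  then have "gap_end s \<le> s'"
    using gap_end(3)[of s s'] by auto
  then show "root_in_gap s < root_in_gap s'"
    using root_in_gap(1)[OF s(1)] root_in_gap(1)[OF s(2)] by auto
qed

lemma finite_roots: "finite roots"
  using finite_K by (simp add: roots_def gap_starts_def)

lemma card_roots: "card roots = Suc (card K)"
proof -
  have "lo \<notin> t ` K"
    using pole_in_lo_hi by force
  then have "card gap_starts = Suc (card K)"
    unfolding gap_starts_def using finite_K card_image[OF inj_t] by simp
  then show ?thesis
    unfolding roots_def using card_image[OF strict_mono_on_imp_inj_on[OF strict_mono_on_root_in_gap]]
    by simp
qed

lemma F_roots: "l \<in> roots \<Longrightarrow> F l = 0"
  unfolding roots_def using root_in_gap(2) by auto

lemma roots_not_poles: "l \<in> roots \<Longrightarrow> l \<notin> t ` K"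
  unfolding roots_def using root_in_gap(1) pole_notin_gap by fastforce

lemma roots_bound: "l \<in> roots \<Longrightarrow> \<bar>l\<bar> < hi"
proof -
  assume "l \<in> roots"
  then obtain s where s: "s \<in> gap_starts" "l = root_in_gap s"
    by (auto simp: roots_def)
  have "gap_end s \<le> hi"
    using gap_end(3)[OF s(1), of hi] gap_starts_bounds[OF s(1)] by auto
  then show ?thesis
    using root_in_gap(1)[OF s(1)] gap_starts_bounds[OF s(1)] s lo_less_hi
    unfolding lo_def hi_def by auto
qed

definition FC :: "complex \<Rightarrow> complex" where
  "FC z = z - of_real a - (\<Sum>k\<in>K. of_real (w k) / (z - of_real (t k)))"

definition Q_real :: "real \<Rightarrow> real" where
  "Q_real x = (\<Prod>k\<in>K. x - t k)"

definition Q_poly :: "complex poly" where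
  "Q_poly = (\<Prod>k\<in>K. [:- of_real (t k), 1:])"

definition P_poly :: "complex poly" where
  "P_poly = [:- of_real a, 1:] * Q_poly -
     (\<Sum>k\<in>K. smult (of_real (w k)) (\<Prod>j\<in>K-{k}. [:- of_real (t j), 1:]))"

definition root_weight :: "real \<Rightarrow> real" where
  "root_weight l = Q_real l / (\<Prod>l'\<in>roots-{l}. l - l')"

definition lagrange_poly :: "complex poly" where
  "lagrange_poly = (\<Sum>l\<in>roots. smult (of_real (root_weight l)) (\<Prod>l'\<in>roots-{l}. [:- of_real l', 1:]))"

lemma poly_Q_poly: "poly Q_poly z = (\<Prod>k\<in>K. z - of_real (t k))"
  by (simp add: Q_poly_def poly_prod)

lemma degree_Q_poly: "degree Q_poly = card K"
  unfolding Q_poly_def using finite_K by (rule degree_prod_linear)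

lemma coeff_Q_poly: "coeff Q_poly (card K) = 1"
  using lead_coeff_prod_linear degree_Q_poly unfolding Q_poly_def by metis

lemma FC_of_real: "FC (of_real x) = of_real (F x)"
  by (simp add: FC_def F_def)

lemma poly_P_poly:
  assumes "\<And>k. k \<in> K \<Longrightarrow> z \<noteq> of_real (t k)"
  shows "poly P_poly z = FC z * poly Q_poly z"
proof -
  have "of_real (w k) * (\<Prod>j\<in>K-{k}. z - of_real (t j)) =
      of_real (w k) / (z - of_real (t k)) * poly Q_poly z" if "k \<in> K" for k
    using that assms[OF that] finite_K by (simp add: poly_Q_poly prod.remove field_simps)
  then have "poly (\<Sum>k\<in>K. smult (of_real (w k)) (\<Prod>j\<in>K-{k}. [:- of_real (t j), 1:])) z =
      (\<Sum>k\<in>K. of_real (w k) / (z - of_real (t k))) * poly Q_poly z"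
    by (simp add: poly_sum poly_prod sum_distrib_right)
  then show ?thesis
    by (simp add: P_poly_def FC_def algebra_simps)
qed

lemma P_poly_eq_prod_roots: "P_poly = (\<Prod>l\<in>roots. [:- of_real l, 1:])"
proof (rule poly_eqI_degree_lead_coeff[of _ "Suc (card K)" _ "of_real ` roots"])
  define A where "A = [:- of_real a, 1:] * Q_poly"
  define R where "R = (\<Sum>k\<in>K. smult (of_real (w k)) (\<Prod>j\<in>K-{k}. [:- of_real (t j), 1:]) :: complex poly)"
  have P: "P_poly = A - R"
    by (simp add: P_poly_def A_def R_def)
  have "degree (smult (of_real (w k)) (\<Prod>j\<in>K-{k}. [:- of_real (t j), 1:]) :: complex poly) \<le> card K"
    if "k \<in> K" for k
    by (rule order.trans[OF degree_smult_le])
       (use finite_K in \<open>simp add: degree_prod_linear card_Diff1_le\<close>)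
  then have R: "degree R \<le> card K"
    unfolding R_def by (intro degree_sum_le) (use finite_K in auto)
  have lead_Q: "lead_coeff Q_poly = 1"
    unfolding Q_poly_def by (rule lead_coeff_prod_linear)
  then have "Q_poly \<noteq> 0" by auto
  then have A: "degree A = Suc (card K)" "lead_coeff A = 1"
    unfolding A_def lead_coeff_mult using lead_Q
    by (subst degree_mult_eq) (auto simp: degree_Q_poly coeff_Q_poly)
  show "degree P_poly \<le> Suc (card K)"
    unfolding P using degree_diff_le_max[of A R] A R by auto
  show "coeff P_poly (Suc (card K)) = coeff (\<Prod>l\<in>roots. [:- of_real l, 1:]) (Suc (card K))"
    using A R card_roots lead_coeff_prod_linear[of "of_real :: real \<Rightarrow> complex" roots]
      degree_prod_linear[OF finite_roots, of "of_real :: real \<Rightarrow> complex"]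
    by (simp add: P coeff_eq_0)
  show "Suc (card K) \<le> card (of_real ` roots :: complex set)"
    by (subst card_image) (auto simp: inj_on_def card_roots)
  show "degree (\<Prod>l\<in>roots. [:- of_real l, 1:] :: complex poly) \<le> Suc (card K)"
    by (simp add: degree_prod_linear[OF finite_roots] card_roots)
  fix z :: complex assume "z \<in> of_real ` roots"
  then obtain l where l: "l \<in> roots" "z = of_real l" by auto
  then have "poly P_poly z = of_real (F l) * poly Q_poly z"
    using roots_not_poles[OF l(1)] by (subst poly_P_poly) (auto simp: FC_of_real)
  then show "poly P_poly z = poly (\<Prod>l\<in>roots. [:- of_real l, 1:]) z"
    using l finite_roots by (auto simp: F_roots poly_prod prod_zero_iff)
qed

lemma FC_mult_Q:
  assumes "\<And>k. k \<in> K \<Longrightarrow> z \<noteq> of_real (t k)"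
  shows "FC z * poly Q_poly z = (\<Prod>l\<in>roots. z - of_real l)"
  using poly_P_poly[OF assms] by (simp add: P_poly_eq_prod_roots poly_prod)

lemma F_mult_Q_real:
  assumes "x \<notin> t ` K"
  shows "F x * Q_real x = (\<Prod>l\<in>roots. x - l)"
proof -
  have "of_real (F x * Q_real x) = (of_real (\<Prod>l\<in>roots. x - l) :: complex)"
    using FC_mult_Q[of "of_real x"] assms by (auto simp: FC_of_real poly_Q_poly Q_real_def)
  then show ?thesis
    by (rule of_real_eq_iff[THEN iffD1])
qed

lemma degree_prod_roots_remove:
  "l \<in> roots \<Longrightarrow> degree (\<Prod>l'\<in>roots-{l}. [:- of_real l', 1:] :: complex poly) = card K"
  using finite_roots card_roots by (simp add: degree_prod_linear)

lemma Q_poly_eq_lagrange_poly: "Q_poly = lagrange_poly"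
proof (rule poly_eqI_degree_lead_coeff[of _ "Suc (card K)" _ "of_real ` roots"])
  have "degree lagrange_poly \<le> card K"
    unfolding lagrange_poly_def using finite_roots degree_prod_roots_remove
    by (intro degree_sum_le) (auto intro: order.trans[OF degree_smult_le])
  then show "degree lagrange_poly \<le> Suc (card K)"
    "coeff Q_poly (Suc (card K)) = coeff lagrange_poly (Suc (card K))"
    using degree_Q_poly by (auto simp: coeff_eq_0)
  show "Suc (card K) \<le> card (of_real ` roots :: complex set)"
    by (subst card_image) (auto simp: inj_on_def card_roots)
  show "degree Q_poly \<le> Suc (card K)"
    by (simp add: degree_Q_poly)
  fix z :: complex assume "z \<in> of_real ` roots"
  then obtain l where l: "l \<in> roots" "z = of_real l" by auto
  have "poly lagrange_poly z = of_real (root_weight l) * (\<Prod>l'\<in>roots-{l}. z - of_real l')"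
  proof -
    have "(\<Prod>l''\<in>roots-{l'}. z - of_real l'') = 0" if "l' \<in> roots - {l}" for l'
      using that l finite_roots by (intro prod_zero) auto
    then show ?thesis
      using l finite_roots
      by (simp add: lagrange_poly_def poly_sum poly_prod sum.remove[of roots l] sum.neutral)
  qed
  also have "\<dots> = of_real (root_weight l * (\<Prod>l'\<in>roots-{l}. l - l'))"
    using l by simp
  also have "\<dots> = of_real (Q_real l)"
    using finite_roots by (simp add: root_weight_def)
  finally show "poly Q_poly z = poly lagrange_poly z"
    using l by (simp add: poly_Q_poly Q_real_def)
qed

lemma sum_root_weight: "(\<Sum>l\<in>roots. root_weight l) = 1"
proof -
  have "coeff (\<Prod>l'\<in>roots-{l}. [:- of_real l', 1:] :: complex poly) (card K) = 1" if "l \<in> roots" for l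
    using lead_coeff_prod_linear[of "of_real :: real \<Rightarrow> complex" "roots - {l}"]
      degree_prod_roots_remove[OF that] by simp
  then have "coeff lagrange_poly (card K) = (\<Sum>l\<in>roots. of_real (root_weight l))"
    by (simp add: lagrange_poly_def coeff_sum)
  then have "of_real (\<Sum>l\<in>roots. root_weight l) = (1 :: complex)"
    using Q_poly_eq_lagrange_poly coeff_Q_poly by simp
  then show ?thesis
    by (metis of_real_eq_1_iff)
qed

lemma root_weight_pos:
  assumes l: "l \<in> roots"
  shows "0 < root_weight l"
proof -
  define d where "d = 1 + (\<Sum>k\<in>K. w k / (l - t k)\<^sup>2)"
  define h where "h x = (\<Prod>l'\<in>roots-{l}. x - l')" for x
  have np: "l \<notin> t ` K"
    using roots_not_poles[OF l] .
  have "0 \<le> (\<Sum>k\<in>K. w k / (l - t k)\<^sup>2)"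
    using weight_pos by (intro sum_nonneg) (simp add: less_imp_le)
  then have d_pos: "0 < d"
    unfolding d_def by linarith
  text \<open>Near \<open>l\<close>, \<open>F x * Q x = (x - l) * h x\<close> and \<open>F l = 0\<close>; compare derivatives at \<open>l\<close>.\<close>
  have "eventually (\<lambda>x. x \<in> - t ` K - {l}) (at l)"
    using finite_K np by (intro eventually_at_in_open) (auto intro: finite_imp_closed)
  then have "eventually (\<lambda>x. (F x - F l) / (x - l) * Q_real x = h x) (at l)"
  proof eventually_elim
    case (elim x)
    then have "F x * Q_real x = (x - l) * h x"
      using F_mult_Q_real finite_roots l by (auto simp: h_def prod.remove)
    then show ?case
      using elim F_roots[OF l] by (auto simp: field_simps)
  qed
  moreover have "((\<lambda>x. (F x - F l) / (x - l) * Q_real x) \<longlongrightarrow> d * Q_real l) (at l)"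
    using has_field_derivative_F[OF np] unfolding d_def has_field_derivative_iff Q_real_def
    by (intro tendsto_intros) auto
  ultimately have "(h \<longlongrightarrow> d * Q_real l) (at l)"
    by (blast intro: Lim_transform_eventually)
  moreover have "(h \<longlongrightarrow> h l) (at l)"
    unfolding h_def by (intro tendsto_intros)
  ultimately have "h l = d * Q_real l"
    using tendsto_unique[OF at_neq_bot] by blast
  moreover have "Q_real l \<noteq> 0"
    using finite_K np by (auto simp: Q_real_def)
  ultimately have "root_weight l = 1 / d"
    by (simp add: root_weight_def h_def)
  then show ?thesis
    using d_pos by simp
qed

lemma minus_inverse_FC:
  assumes "Im z \<noteq> 0"
  shows "- 1 / FC z = (\<Sum>l\<in>roots. of_real (root_weight l) / (of_real l - z))"
proof -
  have not_real: "z - of_real x \<noteq> 0" for x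
    using assms by auto
  define L where "L = (\<Prod>l\<in>roots. z - of_real l)"
  have "poly Q_poly z \<noteq> 0" "L \<noteq> 0"
    using finite_K finite_roots not_real by (auto simp: poly_Q_poly L_def)
  moreover have "FC z * poly Q_poly z = L"
    using FC_mult_Q[of z] not_real by (auto simp: L_def)
  ultimately have "- 1 / FC z = - poly lagrange_poly z / L"
    by (auto simp: Q_poly_eq_lagrange_poly field_simps)
  also have "\<dots> = (\<Sum>l\<in>roots. - (of_real (root_weight l) * (\<Prod>l'\<in>roots-{l}. z - of_real l') / L))"
    by (simp add: lagrange_poly_def poly_sum poly_prod sum_divide_distrib sum_negf)
  also have "\<dots> = (\<Sum>l\<in>roots. of_real (root_weight l) / (of_real l - z))"
  proof (intro sum.cong refl)
    fix l assume "l \<in> roots"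
    then have L_eq: "L = (z - of_real l) * (\<Prod>l'\<in>roots-{l}. z - of_real l')"
      using finite_roots by (simp add: L_def prod.remove)
    have "(\<Prod>l'\<in>roots-{l}. z - of_real l') \<noteq> 0"
      using finite_roots not_real by auto
    then show "- (of_real (root_weight l) * (\<Prod>l'\<in>roots-{l}. z - of_real l') / L) =
        of_real (root_weight l) / (of_real l - z)"
      unfolding L_eq using not_real[of l] by (simp add: field_simps)
  qed
  finally show ?thesis .
qed

end

lemma minus_inverse_rational_pick_partial_fractions:
  fixes K :: "'i set" and t w :: "'i \<Rightarrow> real" and a M :: real
  assumes "finite K" "inj_on t K" "\<And>k. k \<in> K \<Longrightarrow> 0 < w k" "\<And>k. k \<in> K \<Longrightarrow> \<bar>t k\<bar> \<le> M"
    "0 \<le> M"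
  obtains L :: "real set" and c :: "real \<Rightarrow> real"
  where "finite L" "\<And>l. l \<in> L \<Longrightarrow> 0 < c l" "(\<Sum>l\<in>L. c l) = 1"
    "\<And>l. l \<in> L \<Longrightarrow> \<bar>l\<bar> \<le> M + 2 + \<bar>a\<bar> + (\<Sum>k\<in>K. w k)"
    "\<And>z. Im z \<noteq> 0 \<Longrightarrow> (\<Sum>l\<in>L. of_real (c l) / (of_real l - z)) =
        - 1 / (z - of_real a - (\<Sum>k\<in>K. of_real (w k) / (z - of_real (t k))))"
proof -
  interpret rational_pick K t w a M
    using assms by unfold_locales
  show ?thesis
    using that[OF finite_roots root_weight_pos sum_root_weight] roots_bound minus_inverse_FC
    unfolding hi_def bnd_def FC_def by force
qed

section \<open>Probability measures with a prescribed Stieltjes transform\<close>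

lemma norm_inverse_real_minus_le:
  assumes "Im z \<noteq> 0"
  shows "norm (1 / (complex_of_real x - z)) \<le> 1 / \<bar>Im z\<bar>"
proof -
  have "\<bar>Im z\<bar> \<le> cmod (complex_of_real x - z)"
    using abs_Im_le_cmod[of "complex_of_real x - z"] by simp
  then show ?thesis
    using assms by (simp add: norm_divide frac_le)
qed

lemma isCont_inverse_real_minus:
  assumes "Im z \<noteq> 0"
  shows "isCont (\<lambda>x. 1 / (complex_of_real x - z)) x"
  using assms by (intro continuous_intros) (auto simp: complex_eq_iff)

lemma weak_conv_stieltjes:
  fixes \<mu> :: "nat \<Rightarrow> real measure"
  assumes "\<And>n. real_distribution (\<mu> n)" "real_distribution \<nu>" "weak_conv_m \<mu> \<nu>" "Im z \<noteq> 0"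
  shows "(\<lambda>n. stieltjes (\<mu> n) z) \<longlonglongrightarrow> stieltjes \<nu> z"
  unfolding stieltjes_def
  using assms(1-3) isCont_inverse_real_minus[OF assms(4)] norm_inverse_real_minus_le[OF assms(4)]
  by (rule weak_conv_imp_integral_bdd_continuous_conv)

text \<open>Helly's selection theorem, for distributions supported in a fixed interval.\<close>

lemma bounded_support_weak_limit:
  fixes \<mu> :: "nat \<Rightarrow> real measure"
  assumes dist: "\<And>n. real_distribution (\<mu> n)"
    and supp: "\<And>n. AE x in \<mu> n. \<bar>x\<bar> \<le> R" and "0 \<le> R"
  obtains r \<nu> where "strict_mono r" "real_distribution \<nu>" "weak_conv_m (\<mu> \<circ> r) \<nu>"
    "AE x in \<nu>. \<bar>x\<bar> \<le> R"
proof -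
  have "measure (\<mu> n) {- R - 1<..R + 1} = 1" for n
  proof -
    interpret real_distribution "\<mu> n" by (rule dist)
    have "AE x in \<mu> n. x \<in> {- R - 1<..R + 1}"
      using supp[of n] by eventually_elim auto
    then show ?thesis
      by (simp add: prob_eq_1)
  qed
  then have "tight \<mu>"
    unfolding tight_def using dist \<open>0 \<le> R\<close>
    by (intro conjI allI impI exI[of _ "- R - 1"] exI[of _ "R + 1"]) auto
  then obtain r \<nu> where r: "strict_mono r" and \<nu>: "real_distribution \<nu>"
    and conv: "weak_conv_m (\<mu> \<circ> r) \<nu>"
    using tight_imp_convergent_subsubsequence[of \<mu> id] strict_mono_id by auto
  interpret \<nu>: real_distribution \<nu> by (rule \<nu>)
  define \<phi> where "\<phi> x = min 1 (max 0 (\<bar>x\<bar> - R))" for x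
  have \<phi>_bound: "norm (\<phi> x) \<le> 1" for x
    by (auto simp: \<phi>_def)
  have [measurable]: "\<phi> \<in> borel_measurable borel"
    unfolding \<phi>_def by measurable
  have "isCont \<phi> x" for x
    unfolding \<phi>_def by (intro continuous_intros)
  then have "(\<lambda>n. integral\<^sup>L ((\<mu> \<circ> r) n) \<phi>) \<longlonglongrightarrow> integral\<^sup>L \<nu> \<phi>"
    using weak_conv_imp_integral_bdd_continuous_conv[of "\<mu> \<circ> r" \<nu> \<phi> 1] dist \<nu> conv \<phi>_bound
    by simp
  moreover have "integral\<^sup>L (\<mu> n) \<phi> = 0" for n
    using supp[of n] by (subst integral_eq_zero_AE) (auto simp: \<phi>_def elim!: eventually_mono)
  ultimately have "integral\<^sup>L \<nu> \<phi> = 0"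
    by (simp add: o_def LIMSEQ_const_iff)
  moreover have "integrable \<nu> \<phi>"
    using \<phi>_bound by (intro \<nu>.integrable_const_bound[where B=1]) auto
  ultimately have "AE x in \<nu>. \<phi> x = 0"
    by (subst (asm) integral_nonneg_eq_0_iff_AE) (auto simp: \<phi>_def)
  then have "AE x in \<nu>. \<bar>x\<bar> \<le> R"
    by eventually_elim (auto simp: \<phi>_def split: if_splits)
  with r \<nu> conv show ?thesis
    using that by blast
qed

definition finite_distribution :: "real set \<Rightarrow> (real \<Rightarrow> real) \<Rightarrow> real measure" where
  "finite_distribution L c =
     distr (measure_pmf (embed_pmf (\<lambda>x. if x \<in> L then c x else 0))) borel (\<lambda>x. x)"

lemma finite_distribution:
  assumes "finite L" "\<And>l. l \<in> L \<Longrightarrow> 0 \<le> c l" "(\<Sum>l\<in>L. c l) = 1"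
  shows "real_distribution (finite_distribution L c)"
    and "AE x in finite_distribution L c. x \<in> L"
    and "\<And>g :: real \<Rightarrow> 'b::{banach, second_countable_topology}. g \<in> borel_measurable borel \<Longrightarrow>
        integral\<^sup>L (finite_distribution L c) g = (\<Sum>l\<in>L. c l *\<^sub>R g l)"
proof -
  define p where "p = embed_pmf (\<lambda>x. if x \<in> L then c x else 0)"
  have "(\<integral>\<^sup>+x. ennreal (if x \<in> L then c x else 0) \<partial>count_space UNIV) = (\<Sum>x\<in>L. ennreal (c x))"
    using assms(1) by (subst nn_integral_count_space') auto
  also have "\<dots> = 1"
    using assms(2,3) by (simp add: sum_ennreal)
  finally have pmf_p: "pmf p x = (if x \<in> L then c x else 0)" for x
    unfolding p_def using assms(2) by (subst pmf_embed_pmf) auto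
  have id: "finite_distribution L c = distr (measure_pmf p) borel (\<lambda>x. x)"
    by (simp add: finite_distribution_def p_def)
  show "real_distribution (finite_distribution L c)"
    unfolding id by (auto intro!: real_distribution.intro measure_pmf.prob_space_distr
        simp: real_distribution_axioms_def)
  show "AE x in finite_distribution L c. x \<in> L"
    unfolding id using assms(1)
    by (subst AE_distr_iff) (auto simp: AE_measure_pmf_iff set_pmf_iff pmf_p finite_imp_closed split: if_splits)
  fix g :: "real \<Rightarrow> 'b" assume [measurable]: "g \<in> borel_measurable borel"
  have "integral\<^sup>L (finite_distribution L c) g = integral\<^sup>L (measure_pmf p) g"
    unfolding id by (simp add: integral_distr)
  also have "\<dots> = (\<Sum>l\<in>L. pmf p l *\<^sub>R g l)"
    by (rule integral_measure_pmf[OF assms(1)]) (auto simp: pmf_p set_pmf_iff split: if_splits)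
  finally show "integral\<^sup>L (finite_distribution L c) g = (\<Sum>l\<in>L. c l *\<^sub>R g l)"
    by (simp add: pmf_p)
qed

lemma (in prob_space) integral_suminf_geometric_bound:
  fixes f :: "nat \<Rightarrow> 'a \<Rightarrow> 'b::{banach, second_countable_topology}"
  assumes "\<And>n. integrable M (f n)" "AE x in M. \<forall>n. norm (f n x) \<le> C * q ^ n"
    and "0 \<le> q" "q < 1"
  shows "(\<integral>x. (\<Sum>n. f n x) \<partial>M) = (\<Sum>n. \<integral>x. f n x \<partial>M)"
proof (rule integral_suminf)
  have geometric: "summable (\<lambda>n. C * q ^ n)"
    using assms(3,4) by (intro summable_mult summable_geometric) auto
  show "AE x in M. summable (\<lambda>n. norm (f n x))"
    using assms(2) by eventually_elim (auto intro: summable_comparison_test'[OF geometric])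
  have "(\<integral>x. norm (f n x) \<partial>M) \<le> (\<integral>x. C * q ^ n \<partial>M)" for n
    using assms(1,2) by (intro integral_mono_AE) auto
  then show "summable (\<lambda>n. \<integral>x. norm (f n x) \<partial>M)"
    by (intro summable_comparison_test'[OF geometric]) (auto simp: prob_space)
qed fact

lemma moment_bound:
  assumes "real_distribution \<nu>" "AE x in \<nu>. \<bar>x\<bar> \<le> R"
  shows "integrable \<nu> (\<lambda>x. x ^ N)" "\<bar>\<integral>x. x ^ N \<partial>\<nu>\<bar> \<le> R ^ N"
proof -
  interpret real_distribution \<nu> by fact
  have bound: "AE x in \<nu>. \<bar>x ^ N\<bar> \<le> R ^ N"
    using assms(2) by eventually_elim (auto simp: power_abs intro: power_mono)
  then show int: "integrable \<nu> (\<lambda>x. x ^ N)"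
    by (intro integrable_const_bound[where B="R ^ N"]) auto
  have "\<bar>\<integral>x. x ^ N \<partial>\<nu>\<bar> \<le> (\<integral>x. \<bar>x ^ N\<bar> \<partial>\<nu>)"
    by (rule integral_abs_bound)
  also have "\<dots> \<le> (\<integral>x. R ^ N \<partial>\<nu>)"
    using bound int by (intro integral_mono_AE) auto
  also have "\<dots> = R ^ N"
    using prob_space by simp
  finally show "\<bar>\<integral>x. x ^ N \<partial>\<nu>\<bar> \<le> R ^ N" .
qed

lemma stieltjes_eq_moment_series:
  assumes \<nu>: "real_distribution \<nu>" and supp: "AE x in \<nu>. \<bar>x\<bar> \<le> R" and "0 \<le> R"
    and z: "0 < Im z" "2 * R \<le> cmod z"
  shows "stieltjes \<nu> z = - (\<Sum>N. of_real (\<integral>x. x ^ N \<partial>\<nu>) * (1 / z) ^ Suc N)"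
proof -
  interpret real_distribution \<nu> by fact
  define w where "w = 1 / z"
  define f where "f = (\<lambda>N (x :: real). of_real (x ^ N) * w ^ Suc N)"
  have "z \<noteq> 0"
    using z by auto
  then have Rw: "R * cmod w \<le> 1 / 2"
    using z by (simp add: w_def norm_divide field_simps)
  have f_bound: "norm (f N x) \<le> cmod w * (R * cmod w) ^ N" if "\<bar>x\<bar> \<le> R" for N x
  proof -
    have "\<bar>x\<bar> ^ N * cmod w ^ N \<le> R ^ N * cmod w ^ N"
      using that by (intro mult_right_mono power_mono) auto
    then have "cmod w * (\<bar>x\<bar> ^ N * cmod w ^ N) \<le> cmod w * (R ^ N * cmod w ^ N)"
      by (rule mult_left_mono) simp
    then show ?thesis
      by (simp add: f_def norm_mult norm_power power_mult_distrib power_abs mult_ac)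
  qed
  have f_int: "integrable \<nu> (f N)" for N
  proof -
    have "integrable \<nu> (\<lambda>x. complex_of_real (x ^ N))"
      using moment_bound(1)[OF \<nu> supp] by (simp only: complex_of_real_integrable_eq)
    then show ?thesis
      unfolding f_def by (rule integrable_mult_left)
  qed
  have "1 / (complex_of_real x - z) = - (\<Sum>N. f N x)" if "\<bar>x\<bar> \<le> R" for x
  proof -
    have q: "norm (of_real x * w) < 1"
      using that Rw \<open>0 \<le> R\<close> mult_right_mono[OF that, of "cmod w"] by (simp add: norm_mult)
    then have "(\<lambda>N. w * (of_real x * w) ^ N) sums (w * (1 / (1 - of_real x * w)))"
      by (intro sums_mult geometric_sums)
    moreover have "z - complex_of_real x \<noteq> 0"
      using z(1) by (auto simp: complex_eq_iff)
    then have "w * (1 / (1 - of_real x * w)) = 1 / (z - complex_of_real x)"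
      using \<open>z \<noteq> 0\<close> by (simp add: w_def field_simps)
    also have "\<dots> = - (1 / (complex_of_real x - z))"
      by (metis minus_diff_eq minus_divide_right)
    ultimately show ?thesis
      by (simp add: f_def sums_iff power_mult_distrib mult_ac)
  qed
  then have "stieltjes \<nu> z = (\<integral>x. - (\<Sum>N. f N x) \<partial>\<nu>)"
    unfolding stieltjes_def using supp by (intro integral_cong_AE) (auto simp: f_def elim!: eventually_mono)
  also have "\<dots> = - (\<Sum>N. \<integral>x. f N x \<partial>\<nu>)"
    using supp f_bound Rw \<open>0 \<le> R\<close>
    by (subst integral_minus, subst integral_suminf_geometric_bound[where C="cmod w" and q="R * cmod w"])
       (auto simp: f_int elim!: eventually_mono)
  also have "(\<lambda>N. \<integral>x. f N x \<partial>\<nu>) = (\<lambda>N. of_real (\<integral>x. x ^ N \<partial>\<nu>) * w ^ Suc N)"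
    by (simp add: f_def del: of_real_power)
  finally show ?thesis
    by (simp add: w_def)
qed

lemma powser_coeffs_zero_if_zero_along_sequence:
  fixes a :: "nat \<Rightarrow> 'a::{real_normed_field, banach}"
  assumes r: "0 < r" and summable: "\<And>w. norm w < r \<Longrightarrow> summable (\<lambda>n. a n * w ^ n)"
    and v: "v \<longlonglongrightarrow> 0" "\<And>j. v j \<noteq> 0" and zero: "\<And>j. (\<Sum>n. a n * v j ^ n) = 0"
  shows "a n = 0"
proof -
  define f where "f w = (\<Sum>n. a n * w ^ n)" for w
  have "(\<lambda>j. norm (v j)) \<longlonglongrightarrow> 0"
    using tendsto_norm[OF v(1)] by simp
  then have small: "eventually (\<lambda>j. norm (v j) < s) sequentially" if "0 < s" for s
    using that by (rule order_tendstoD(2))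
  have "isCont f 0"
    unfolding f_def using r summable[of "of_real (r / 2)"]
    by (intro isCont_powser[where K="of_real (r / 2)"]) auto
  then have "(\<lambda>j. f (v j)) \<longlonglongrightarrow> f 0"
    using v(1) by (rule isCont_tendsto_compose)
  then have f0: "f 0 = 0"
    using zero by (simp add: f_def LIMSEQ_const_iff)
  show "a n = 0"
  proof (rule ccontr)
    assume an: "a n \<noteq> 0"
    have sums: "norm (w - 0) < r \<Longrightarrow> (\<lambda>n. a n * (w - 0) ^ n) sums f w" for w
      using summable by (simp add: f_def summable_sums)
    have "0 < n"
      using f0 an by (cases n) (auto simp: f_def)
    then obtain s where "0 < s" "\<And>w. w \<in> cball 0 s - {0} \<Longrightarrow> f w \<noteq> 0"
      using powser_0_nonzero[where \<xi>=0 and f=f and a=a and m=n, OF r sums f0 an] by blast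
    moreover obtain j where "norm (v j) < s"
      using eventually_happens'[OF sequentially_bot small[OF \<open>0 < s\<close>]] by blast
    ultimately show False
      using v(2)[of j] zero[of j] by (auto simp: f_def)
  qed
qed

section \<open>The measure with Stieltjes transform \<open>1 / denom\<close>\<close>

context unit_interval_prob
begin

definition kern :: "complex \<Rightarrow> real \<Rightarrow> complex" where
  "kern z y = z * of_real y / (1 - z - of_real y)"

definition denom :: "real \<Rightarrow> complex \<Rightarrow> complex" where
  "denom \<beta> z = - z - exp (of_real \<beta>) * (\<integral>x. kern z x \<partial>mu)"

lemma kern_denom_nonzero: "Im z \<noteq> 0 \<Longrightarrow> 1 - z - complex_of_real y \<noteq> 0"
  by (auto simp: complex_eq_iff)

lemma kern_partial_fraction:
  assumes "Im z \<noteq> 0"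
  shows "kern z y = - of_real y - of_real (y * (1 - y)) / (z - of_real (1 - y))"
proof -
  have "z - complex_of_real (1 - y) = - (1 - z - complex_of_real y)"
    by simp
  then show ?thesis
    using kern_denom_nonzero[OF assms] unfolding kern_def by (simp add: field_simps)
qed

lemma norm_kern_le:
  assumes "0 < Im z" "0 \<le> y" "y \<le> 1"
  shows "norm (kern z y) \<le> cmod z / Im z"
proof -
  have "Im z \<le> cmod (1 - z - complex_of_real y)"
    using abs_Im_le_cmod[of "1 - z - complex_of_real y"] assms by simp
  moreover have "cmod (z * complex_of_real y) \<le> cmod z"
    using assms by (simp add: norm_mult mult_left_le)
  ultimately show ?thesis
    unfolding kern_def norm_divide using assms by (intro frac_le) auto
qed

lemma isCont_kern: "Im z \<noteq> 0 \<Longrightarrow> isCont (kern z) y"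
  unfolding kern_def using kern_denom_nonzero by (intro continuous_intros) auto

lemma borel_measurable_kern [measurable]: "kern z \<in> borel_measurable borel"
  unfolding kern_def by measurable

lemma Im_kern_nonneg:
  assumes "0 < Im z" "0 \<le> y" "y \<le> 1"
  shows "0 \<le> Im (kern z y)"
proof -
  have "Im (kern z y) = y * (1 - y) * Im z / ((1 - Re z - y)\<^sup>2 + (Im z)\<^sup>2)"
    unfolding kern_def by (simp add: Im_divide algebra_simps)
  then show ?thesis
    using assms by simp
qed

lemma integrable_kern: "0 < Im z \<Longrightarrow> integrable mu (kern z)"
  by (rule integrable_bounded_on_unit_interval[where B="cmod z / Im z"]) (auto intro: norm_kern_le)

lemma Im_denom_neg:
  assumes "0 < Im z"
  shows "Im (denom \<beta> z) < 0"
proof -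
  have "0 \<le> (\<integral>x. Im (kern z x) \<partial>mu)"
    by (rule integral_nonneg_AE) (use AE_in_unit_interval in \<open>eventually_elim, auto intro: Im_kern_nonneg[OF assms]\<close>)
  then have "0 \<le> exp \<beta> * Im (\<integral>x. kern z x \<partial>mu)"
    by (simp add: integral_Im[OF integrable_kern[OF assms]])
  moreover have "Im (denom \<beta> z) = - Im z - exp \<beta> * Im (\<integral>x. kern z x \<partial>mu)"
    by (simp add: denom_def exp_of_real)
  ultimately show ?thesis
    using assms by linarith
qed

lemma denom_nonzero: "0 < Im z \<Longrightarrow> denom \<beta> z \<noteq> 0"
  using Im_denom_neg[of z \<beta>] by auto

text \<open>Rounding down to the grid \<open>{0, 1/m, \<dots>, 1}\<close> turns \<open>mu\<close> into a measure with finitely many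
  atoms, for which \<open>1 / denom\<close> becomes a rational Pick function.\<close>

definition cell :: "nat \<Rightarrow> real \<Rightarrow> nat" where
  "cell m x = min m (nat \<lfloor>real m * x\<rfloor>)"

definition quant :: "nat \<Rightarrow> real \<Rightarrow> real" where
  "quant m x = real (cell m x) / real m"

definition cell_mass :: "nat \<Rightarrow> nat \<Rightarrow> real" where
  "cell_mass m k = measure mu {x. cell m x = k}"

definition denom_quant :: "real \<Rightarrow> nat \<Rightarrow> complex \<Rightarrow> complex" where
  "denom_quant \<beta> m z = - z - exp (of_real \<beta>) * (\<integral>x. kern z (quant m x) \<partial>mu)"

lemma borel_measurable_cell [measurable]: "(\<lambda>x. real (cell m x)) \<in> borel_measurable borel"
  unfolding cell_def by measurable

lemma borel_measurable_quant [measurable]: "quant m \<in> borel_measurable borel"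
  unfolding quant_def by measurable

lemma sets_cell [measurable]: "{x. cell m x = k} \<in> sets mu"
proof -
  have "{x\<in>space borel. real (cell m x) = real k} \<in> sets borel"
    by measurable
  then show ?thesis
    using sets_mu by simp
qed

lemma cell_le: "cell m x \<le> m"
  by (simp add: cell_def)

lemma quant_bounds: "0 \<le> quant m x" "quant m x \<le> 1"
  by (auto simp: quant_def cell_def divide_le_eq)

lemma integral_comp_quant:
  fixes g :: "real \<Rightarrow> complex"
  shows "(\<integral>x. g (quant m x) \<partial>mu) = (\<Sum>k\<in>{0..m}. of_real (cell_mass m k) * g (real k / real m))"
proof -
  have "(\<Sum>k\<in>{0..m}. indicator {x. cell m x = k} x *\<^sub>R g (real k / real m)) =
      (\<Sum>k\<in>{0..m}. if cell m x = k then g (real k / real m) else 0)" for x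
    by (intro sum.cong) (auto simp: indicator_def)
  then have pw: "g (quant m x) = (\<Sum>k\<in>{0..m}. indicator {x. cell m x = k} x *\<^sub>R g (real k / real m))" for x
    using cell_le[of m x] by (simp add: sum.delta' quant_def)
  have "(\<integral>x. g (quant m x) \<partial>mu) =
      (\<integral>x. (\<Sum>k\<in>{0..m}. indicator {x. cell m x = k} x *\<^sub>R g (real k / real m)) \<partial>mu)"
    by (simp only: pw)
  also have "\<dots> = (\<Sum>k\<in>{0..m}. (\<integral>x. indicator {x. cell m x = k} x *\<^sub>R g (real k / real m) \<partial>mu))"
    by (rule Bochner_Integration.integral_sum)
       (auto intro!: integrable_scaleR_left simp: m.emeasure_eq_measure)
  finally show ?thesis
    by (simp add: cell_mass_def m.emeasure_eq_measure scaleR_conv_of_real)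
qed

lemma sum_cell_mass: "(\<Sum>k\<in>{0..m}. cell_mass m k) = 1"
proof -
  have "of_real (\<Sum>k\<in>{0..m}. cell_mass m k) = (\<integral>x. (1::complex) \<partial>mu)"
    using integral_comp_quant[of "\<lambda>_. 1" m] by simp
  then have "of_real (\<Sum>k\<in>{0..m}. cell_mass m k) = (1::complex)"
    by (simp add: m.prob_space)
  then show ?thesis
    by (metis of_real_eq_1_iff)
qed

lemma quant_tendsto:
  assumes "0 \<le> x" "x \<le> 1"
  shows "(\<lambda>m. quant m x) \<longlonglongrightarrow> x"
proof (rule tendsto_sandwich[where f="\<lambda>m. x - 1 / real m" and h="\<lambda>m. x"])
  have "quant m x = real_of_int \<lfloor>real m * x\<rfloor> / real m" if "1 \<le> m" for m
  proof -
    have "\<lfloor>real m * x\<rfloor> \<le> \<lfloor>real m\<rfloor>"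
      using assms by (intro floor_mono) (simp add: mult_left_le)
    then show ?thesis
      using assms by (simp add: quant_def cell_def min_absorb2 nat_le_iff)
  qed
  moreover have "x - 1 / real m \<le> real_of_int \<lfloor>real m * x\<rfloor> / real m" if "1 \<le> m" for m
  proof -
    have "x - 1 / real m = (real m * x - 1) / real m"
      using that by (simp add: field_simps)
    also have "\<dots> \<le> real_of_int \<lfloor>real m * x\<rfloor> / real m"
      using real_of_int_floor_add_one_gt[of "real m * x"] by (intro divide_right_mono) auto
    finally show ?thesis .
  qed
  moreover have "real_of_int \<lfloor>real m * x\<rfloor> / real m \<le> x" if "1 \<le> m" for m
    using that of_int_floor_le[of "real m * x"] by (simp add: field_simps)
  ultimately show "eventually (\<lambda>m. x - 1 / real m \<le> quant m x) sequentially"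
    "eventually (\<lambda>m. quant m x \<le> x) sequentially"
    unfolding eventually_sequentially by (auto intro!: exI[of _ 1])
  show "(\<lambda>m. x - 1 / real m) \<longlonglongrightarrow> x"
    using tendsto_diff[OF tendsto_const lim_1_over_n, of x] by simp
qed simp

lemma denom_quant_tendsto:
  assumes "0 < Im z" "filterlim s sequentially sequentially"
  shows "(\<lambda>n. denom_quant \<beta> (s n) z) \<longlonglongrightarrow> denom \<beta> z"
proof -
  have "(\<lambda>n. \<integral>x. kern z (quant (s n) x) \<partial>mu) \<longlonglongrightarrow> (\<integral>x. kern z x \<partial>mu)"
  proof (rule integral_dominated_convergence[where w="\<lambda>_. cmod z / Im z"])
    show "AE x in mu. (\<lambda>n. kern z (quant (s n) x)) \<longlonglongrightarrow> kern z x"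
      using AE_in_unit_interval
    proof eventually_elim
      case (elim x)
      then have "(\<lambda>n. quant (s n) x) \<longlonglongrightarrow> x"
        using filterlim_compose[OF quant_tendsto assms(2)] by auto
      then show ?case
        using isCont_kern assms by (intro isCont_tendsto_compose[of x "kern z"]) auto
    qed
    show "AE x in mu. norm (kern z (quant (s n) x)) \<le> cmod z / Im z" for n
      using norm_kern_le[OF assms(1) quant_bounds] by auto
  qed (simp_all add: measurable_cong_sets[OF sets_mu refl])
  then show ?thesis
    unfolding denom_quant_def denom_def by (intro tendsto_intros)
qed

definition grid :: "nat \<Rightarrow> nat \<Rightarrow> real" where
  "grid m k = real k / real m"

definition atom_weight :: "real \<Rightarrow> nat \<Rightarrow> nat \<Rightarrow> real" where
  "atom_weight \<beta> m k = exp \<beta> * cell_mass m k * grid m k * (1 - grid m k)"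

definition atoms :: "real \<Rightarrow> nat \<Rightarrow> nat set" where
  "atoms \<beta> m = {k\<in>{0..m}. 0 < atom_weight \<beta> m k}"

definition atom_shift :: "real \<Rightarrow> nat \<Rightarrow> real" where
  "atom_shift \<beta> m = exp \<beta> * (\<Sum>k\<in>{0..m}. cell_mass m k * grid m k)"

definition support_bound :: "real \<Rightarrow> real" where
  "support_bound \<beta> = 3 + 2 * exp \<beta>"

lemma grid_bounds: "1 \<le> m \<Longrightarrow> k \<le> m \<Longrightarrow> 0 \<le> grid m k \<and> grid m k \<le> 1"
  by (auto simp: grid_def divide_le_eq)

lemma atom_weight_bounds:
  assumes "1 \<le> m" "k \<le> m"
  shows "0 \<le> atom_weight \<beta> m k" "atom_weight \<beta> m k \<le> exp \<beta> * cell_mass m k"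
proof -
  have "0 \<le> grid m k * (1 - grid m k)" "grid m k * (1 - grid m k) \<le> 1"
    using grid_bounds[OF assms] by (auto simp: mult_le_one)
  then show "0 \<le> atom_weight \<beta> m k" "atom_weight \<beta> m k \<le> exp \<beta> * cell_mass m k"
    using mult_left_mono[of _ 1 "exp \<beta> * cell_mass m k"]
    by (auto simp: atom_weight_def cell_mass_def mult.assoc)
qed

lemma atom_shift_bounds:
  assumes "1 \<le> m"
  shows "0 \<le> atom_shift \<beta> m" "atom_shift \<beta> m \<le> exp \<beta>"
proof -
  have "0 \<le> (\<Sum>k\<in>{0..m}. cell_mass m k * grid m k)"
    "(\<Sum>k\<in>{0..m}. cell_mass m k * grid m k) \<le> (\<Sum>k\<in>{0..m}. cell_mass m k)"
    using grid_bounds[OF assms] by (auto intro!: sum_nonneg sum_mono mult_left_le simp: cell_mass_def)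
  then show "0 \<le> atom_shift \<beta> m" "atom_shift \<beta> m \<le> exp \<beta>"
    by (auto simp: atom_shift_def sum_cell_mass)
qed

lemma sum_atom_weight_le: "1 \<le> m \<Longrightarrow> (\<Sum>k\<in>atoms \<beta> m. atom_weight \<beta> m k) \<le> exp \<beta>"
proof -
  assume m: "1 \<le> m"
  have "(\<Sum>k\<in>atoms \<beta> m. atom_weight \<beta> m k) \<le> (\<Sum>k\<in>{0..m}. atom_weight \<beta> m k)"
    using atom_weight_bounds(1)[OF m] by (intro sum_mono2) (auto simp: atoms_def)
  also have "\<dots> \<le> (\<Sum>k\<in>{0..m}. exp \<beta> * cell_mass m k)"
    using atom_weight_bounds(2)[OF m] by (intro sum_mono) auto
  also have "\<dots> = exp \<beta>"
    by (simp add: sum_distrib_left[symmetric] sum_cell_mass)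
  finally show ?thesis .
qed

lemma denom_quant_eq_rational_pick:
  assumes m: "1 \<le> m" and z: "Im z \<noteq> 0"
  shows "denom_quant \<beta> m z = - (z - of_real (atom_shift \<beta> m) -
    (\<Sum>k\<in>atoms \<beta> m. of_real (atom_weight \<beta> m k) / (z - of_real (1 - grid m k))))"
proof -
  have "exp (complex_of_real \<beta>) * (\<integral>x. kern z (quant m x) \<partial>mu) =
      (\<Sum>k\<in>{0..m}. of_real (exp \<beta> * cell_mass m k) * kern z (grid m k))"
    by (simp add: integral_comp_quant grid_def exp_of_real sum_distrib_left mult_ac)
  also have "\<dots> = (\<Sum>k\<in>{0..m}. - of_real (exp \<beta> * cell_mass m k * grid m k)
      - of_real (atom_weight \<beta> m k) / (z - of_real (1 - grid m k)))"
    by (intro sum.cong refl) (simp add: kern_partial_fraction[OF z] atom_weight_def algebra_simps)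
  also have "\<dots> = - of_real (atom_shift \<beta> m)
      - (\<Sum>k\<in>{0..m}. of_real (atom_weight \<beta> m k) / (z - of_real (1 - grid m k)))"
    by (simp add: sum_subtractf sum_negf atom_shift_def sum_distrib_left mult_ac)
  also have "(\<Sum>k\<in>{0..m}. of_real (atom_weight \<beta> m k) / (z - of_real (1 - grid m k))) =
      (\<Sum>k\<in>atoms \<beta> m. of_real (atom_weight \<beta> m k) / (z - of_real (1 - grid m k)))"
  proof (intro sum.mono_neutral_right ballI)
    fix k assume "k \<in> {0..m} - atoms \<beta> m"
    then have "atom_weight \<beta> m k = 0"
      using atom_weight_bounds(1)[OF m, of k \<beta>] by (auto simp: atoms_def)
    then show "of_real (atom_weight \<beta> m k) / (z - of_real (1 - grid m k)) = 0"
      by simp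
  qed (auto simp: atoms_def)
  finally show ?thesis
    by (simp add: denom_quant_def)
qed

lemma inverse_denom_quant_partial_fractions:
  assumes m: "1 \<le> m"
  obtains L :: "real set" and c :: "real \<Rightarrow> real"
  where "finite L" "\<And>l. l \<in> L \<Longrightarrow> 0 < c l" "(\<Sum>l\<in>L. c l) = 1"
    "\<And>l. l \<in> L \<Longrightarrow> \<bar>l\<bar> \<le> support_bound \<beta>"
    "\<And>z. 0 < Im z \<Longrightarrow> (\<Sum>l\<in>L. of_real (c l) / (of_real l - z)) = 1 / denom_quant \<beta> m z"
proof -
  have inj: "inj_on (\<lambda>k. 1 - grid m k) (atoms \<beta> m)"
    using m by (auto simp: inj_on_def grid_def)
  have poles: "\<bar>1 - grid m k\<bar> \<le> 1" if "k \<in> atoms \<beta> m" for k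
    using grid_bounds[OF m, of k] that by (auto simp: atoms_def)
  obtain L c where "finite L" "\<And>l. l \<in> L \<Longrightarrow> 0 < c l" "(\<Sum>l\<in>L. c l) = 1"
    and bound: "\<And>l. l \<in> L \<Longrightarrow> \<bar>l\<bar> \<le> 1 + 2 + \<bar>atom_shift \<beta> m\<bar> + (\<Sum>k\<in>atoms \<beta> m. atom_weight \<beta> m k)"
    and pf: "\<And>z. Im z \<noteq> 0 \<Longrightarrow> (\<Sum>l\<in>L. of_real (c l) / (of_real l - z)) =
        - 1 / (z - of_real (atom_shift \<beta> m) -
          (\<Sum>k\<in>atoms \<beta> m. of_real (atom_weight \<beta> m k) / (z - of_real (1 - grid m k))))"
    by (rule minus_inverse_rational_pick_partial_fractions[where K="atoms \<beta> m"
          and t="\<lambda>k. 1 - grid m k" and w="atom_weight \<beta> m" and a="atom_shift \<beta> m" and M=1])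
       (use inj poles in \<open>auto simp: atoms_def\<close>)
  show ?thesis
  proof (rule that)
    show "\<bar>l\<bar> \<le> support_bound \<beta>" if "l \<in> L" for l
      using bound[OF that] atom_shift_bounds[OF m, of \<beta>] sum_atom_weight_le[OF m, of \<beta>]
      unfolding support_bound_def by linarith
    show "(\<Sum>l\<in>L. of_real (c l) / (of_real l - z)) = 1 / denom_quant \<beta> m z" if "0 < Im z" for z
      using pf[of z] that denom_quant_eq_rational_pick[OF m, of z \<beta>]
      by (simp only: divide_minus_right minus_divide_left)
  qed fact+
qed

lemma stieltjes_eq_inverse_denom_exists:
  obtains \<nu> where "real_distribution \<nu>" "AE x in \<nu>. \<bar>x\<bar> \<le> support_bound \<beta>"
    "\<And>z. 0 < Im z \<Longrightarrow> stieltjes \<nu> z = 1 / denom \<beta> z"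
proof -
  have "\<forall>n. \<exists>L c. finite L \<and> (\<forall>l\<in>L. 0 < c l) \<and> (\<Sum>l\<in>L. c l) = 1 \<and>
      (\<forall>l\<in>L. \<bar>l\<bar> \<le> support_bound \<beta>) \<and>
      (\<forall>z. 0 < Im z \<longrightarrow> (\<Sum>l\<in>L. of_real (c l) / (of_real l - z)) = 1 / denom_quant \<beta> (Suc n) z)"
    by (metis inverse_denom_quant_partial_fractions[of "Suc n" \<beta> for n] Suc_eq_plus1 le_add2)
  then obtain L c where L: "\<And>n. finite (L n)" "\<And>n l. l \<in> L n \<Longrightarrow> 0 < c n l"
    "\<And>n. (\<Sum>l\<in>L n. c n l) = 1" "\<And>n l. l \<in> L n \<Longrightarrow> \<bar>l\<bar> \<le> support_bound \<beta>"
    and pf: "\<And>n z. 0 < Im z \<Longrightarrow> (\<Sum>l\<in>L n. of_real (c n l) / (of_real l - z)) = 1 / denom_quant \<beta> (Suc n) z"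
    unfolding choice_iff' choice_iff by blast
  define \<mu> where "\<mu> n = finite_distribution (L n) (c n)" for n
  have "\<And>n l. l \<in> L n \<Longrightarrow> 0 \<le> c n l"
    using L(2) by (simp add: less_imp_le)
  note \<mu> = finite_distribution[OF L(1) this L(3), folded \<mu>_def]
  have supp: "AE x in \<mu> n. \<bar>x\<bar> \<le> support_bound \<beta>" for n
    by (rule eventually_mono[OF \<mu>(2)[of n] L(4)])
  have "0 \<le> support_bound \<beta>"
    unfolding support_bound_def by (simp add: add_nonneg_nonneg)
  with \<mu>(1) supp obtain r \<nu> where r: "strict_mono r" and \<nu>: "real_distribution \<nu>"
    and conv: "weak_conv_m (\<mu> \<circ> r) \<nu>" and supp_\<nu>: "AE x in \<nu>. \<bar>x\<bar> \<le> support_bound \<beta>"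
    by (rule bounded_support_weak_limit)
  have "stieltjes \<nu> z = 1 / denom \<beta> z" if z: "0 < Im z" for z
  proof (rule LIMSEQ_unique)
    show "(\<lambda>n. stieltjes ((\<mu> \<circ> r) n) z) \<longlonglongrightarrow> stieltjes \<nu> z"
      using z by (intro weak_conv_stieltjes[OF _ \<nu> conv]) (simp_all add: \<mu>(1))
    have "filterlim (\<lambda>n. Suc (r n)) sequentially sequentially"
      using filterlim_compose[OF filterlim_Suc filterlim_subseq[OF r]] by (simp add: o_def)
    then have "(\<lambda>n. 1 / denom_quant \<beta> (Suc (r n)) z) \<longlonglongrightarrow> 1 / denom \<beta> z"
      using z by (intro tendsto_divide tendsto_const denom_quant_tendsto denom_nonzero)
    moreover have "stieltjes ((\<mu> \<circ> r) n) z = 1 / denom_quant \<beta> (Suc (r n)) z" for n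
      using pf[OF z, of "r n"] \<mu>(3)[of "r n" "\<lambda>x. 1 / (complex_of_real x - z)"]
      by (simp add: stieltjes_def scaleR_conv_of_real)
    ultimately show "(\<lambda>n. stieltjes ((\<mu> \<circ> r) n) z) \<longlonglongrightarrow> 1 / denom \<beta> z"
      by simp
  qed
  then show ?thesis
    by (rule that[OF \<nu> supp_\<nu>])
qed

section \<open>Moments from the expansion at infinity\<close>

lemma integral_kern_series:
  assumes z: "0 < Im z" "2 \<le> cmod z"
  shows "(\<integral>x. kern z x \<partial>mu) = - (\<Sum>n. of_real (renewal_K mu (enat (Suc n))) * (1 / z) ^ n)"
proof -
  define w where "w = 1 / z"
  define f where "f = (\<lambda>n (x :: real). of_real (x * (1 - x) ^ n) * w ^ n)"
  have "z \<noteq> 0"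
    using z by auto
  then have w: "cmod w \<le> 1 / 2"
    using z by (simp add: w_def norm_divide field_simps)
  have f_bound: "norm (f n x) \<le> cmod w ^ n" if "0 \<le> x" "x \<le> 1" for n x
  proof -
    have "\<bar>x * (1 - x) ^ n\<bar> \<le> 1"
      using that by (simp add: abs_mult mult_le_one power_le_one)
    then show ?thesis
      by (simp add: f_def norm_mult norm_power mult_left_le_one_le del: of_real_mult of_real_power)
  qed
  have f_int: "integrable mu (f n)" for n
    unfolding f_def by (intro integrable_mult_left integrable_bounded_on_unit_interval[where B=1])
      (auto simp: abs_mult mult_le_one power_le_one simp del: of_real_mult of_real_power)
  have series: "kern z x = - (\<Sum>n. f n x)" if "0 \<le> x" "x \<le> 1" for x
  proof -
    have "norm (of_real (1 - x) * w) = (1 - x) * cmod w"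
      using that by (simp add: norm_mult del: of_real_diff)
    also have "\<dots> \<le> cmod w"
      using that by (simp add: mult_left_le_one_le)
    finally have q: "norm (of_real (1 - x) * w) < 1"
      using w by simp
    then have "(\<lambda>n. of_real x * (of_real (1 - x) * w) ^ n) sums (of_real x * (1 / (1 - of_real (1 - x) * w)))"
      by (intro sums_mult geometric_sums)
    moreover have "1 - z - complex_of_real x \<noteq> 0"
      using kern_denom_nonzero z(1) by simp
    then have "of_real x * (1 / (1 - of_real (1 - x) * w)) = - kern z x"
      using \<open>z \<noteq> 0\<close> by (simp add: kern_def w_def field_simps)
    ultimately show ?thesis
      by (simp add: f_def sums_iff power_mult_distrib mult_ac)
  qed
  have "AE x in mu. kern z x = - (\<Sum>n. f n x)"
    using AE_in_unit_interval by eventually_elim (simp add: series)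
  then have "(\<integral>x. kern z x \<partial>mu) = (\<integral>x. - (\<Sum>n. f n x) \<partial>mu)"
    by (intro integral_cong_AE) (simp_all add: f_def measurable_cong_sets[OF sets_mu refl])
  also have "\<dots> = - (\<Sum>n. \<integral>x. f n x \<partial>mu)"
  proof (subst integral_minus, subst m.integral_suminf_geometric_bound)
    show "AE x in mu. \<forall>n. norm (f n x) \<le> 1 * cmod w ^ n"
      using AE_in_unit_interval by eventually_elim (auto simp: f_bound)
  qed (use f_int w in auto)
  also have "(\<lambda>n. \<integral>x. f n x \<partial>mu) = (\<lambda>n. of_real (renewal_K mu (enat (Suc n))) * w ^ n)"
    by (simp add: f_def renewal_K_simps mult.commute del: of_real_power of_real_mult)
  finally show ?thesis
    by (simp add: w_def)
qed

definition renewal_coeff :: "real \<Rightarrow> nat \<Rightarrow> real" where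
  "renewal_coeff \<beta> n = (if n = 0 then 1 else - exp \<beta> * renewal_K mu (enat n))"

lemma abs_renewal_coeff_le: "\<bar>renewal_coeff \<beta> n\<bar> \<le> max 1 (exp \<beta>)"
proof (cases "n = 0")
  case False
  then have "\<bar>renewal_coeff \<beta> n\<bar> = exp \<beta> * renewal_K mu (enat n)"
    using renewal_K_bounds[of "enat n"] by (simp add: renewal_coeff_def abs_mult)
  also have "\<dots> \<le> exp \<beta>"
    using renewal_K_bounds[of "enat n"] by (simp add: mult_left_le)
  finally show ?thesis
    by simp
qed (simp add: renewal_coeff_def)

text \<open>Expanding \<open>s\<^sub>\<nu>(z) \<cdot> denom(z) = 1\<close> in powers of \<open>1/z\<close>: the convolution of the moments of \<open>\<nu>\<close>
  with the coefficients \<open>1, -e\<^sup>\<beta>K(1), -e\<^sup>\<beta>K(2), \<dots>\<close> is the unit sequence.\<close>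

lemma moment_renewal_convolution_sums:
  fixes \<nu> :: "real measure"
  assumes \<nu>: "real_distribution \<nu>" and supp: "AE x in \<nu>. \<bar>x\<bar> \<le> support_bound \<beta>"
    and st: "\<And>z. 0 < Im z \<Longrightarrow> stieltjes \<nu> z = 1 / denom \<beta> z"
    and z: "0 < Im z" "2 * support_bound \<beta> \<le> cmod z"
  shows "(\<lambda>k. of_real (\<Sum>i\<le>k. (\<integral>x. x ^ i \<partial>\<nu>) * renewal_coeff \<beta> (k - i)) * (1 / z) ^ k) sums 1"
proof -
  define R where "R = support_bound \<beta>"
  define w where "w = 1 / z"
  define A where "A n = of_real (\<integral>x. x ^ n \<partial>\<nu>) * w ^ n" for n
  define B where "B n = of_real (renewal_coeff \<beta> n) * w ^ n" for n
  have R: "3 \<le> R"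
    unfolding R_def support_bound_def using exp_gt_zero[of \<beta>] by linarith
  have "z \<noteq> 0"
    using z by auto
  then have Rw: "R * cmod w \<le> 1 / 2"
    using z by (simp add: R_def w_def norm_divide field_simps)
  then have w: "cmod w \<le> 1 / 2"
    using R by (smt (verit) mult_le_cancel_right1 norm_ge_zero)
  have sA: "summable (\<lambda>n. norm (A n))"
  proof (rule summable_comparison_test')
    show "norm (norm (A n)) \<le> (R * cmod w) ^ n" for n
      using moment_bound(2)[OF \<nu> supp, of n] 
      by (simp add: A_def R_def norm_mult norm_power power_mult_distrib mult_right_mono)
  qed (use Rw R in auto)
  have sB: "summable (\<lambda>n. norm (B n))"
  proof (rule summable_comparison_test')
    show "norm (norm (B n)) \<le> max 1 (exp \<beta>) * cmod w ^ n" for n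
      using abs_renewal_coeff_le[of \<beta> n] by (simp add: B_def norm_mult norm_power mult_right_mono)
  qed (use w in \<open>auto intro: summable_mult summable_geometric\<close>)
  have sK: "summable (\<lambda>n. of_real (renewal_K mu (enat (Suc n))) * w ^ n)"
  proof (rule summable_norm_cancel, rule summable_comparison_test')
    show "norm (norm (of_real (renewal_K mu (enat (Suc n))) * w ^ n)) \<le> cmod w ^ n" for n
      using renewal_K_bounds[of "enat (Suc n)"] by (simp add: norm_mult norm_power mult_left_le_one_le)
  qed (use w in auto)
  define Kt where "Kt = (\<Sum>n. of_real (renewal_K mu (enat (Suc n))) * w ^ n)"
  define e :: complex where "e = of_real (exp \<beta>)"
  have s: "stieltjes \<nu> z = - (w * (\<Sum>n. A n))"
  proof -
    have "stieltjes \<nu> z = - (\<Sum>n. w * A n)"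
      using stieltjes_eq_moment_series[OF \<nu> supp _ z(1)] R z(2) by (simp add: A_def w_def R_def mult_ac)
    also have "(\<Sum>n. w * A n) = w * (\<Sum>n. A n)"
      by (rule suminf_mult[OF summable_norm_cancel[OF sA]])
    finally show ?thesis .
  qed
  have "2 \<le> cmod z"
    using R z(2) unfolding R_def by linarith
  then have D: "denom \<beta> z = - z + e * Kt"
    using integral_kern_series[OF z(1)] by (simp add: denom_def Kt_def e_def w_def exp_of_real)
  have B: "(\<Sum>n. B n) = 1 - e * w * Kt"
  proof -
    have "(\<Sum>n. B (Suc n)) = (\<Sum>n. B n) - B 0"
      by (rule suminf_split_head[OF summable_norm_cancel[OF sB]])
    moreover have "(\<Sum>n. B (Suc n)) = (\<Sum>n. (- e * w) * (of_real (renewal_K mu (enat (Suc n))) * w ^ n))"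
      by (simp add: B_def renewal_coeff_def e_def mult_ac)
    moreover have "\<dots> = - e * w * Kt"
      unfolding Kt_def by (rule suminf_mult[OF sK])
    ultimately show ?thesis
      by (simp add: B_def renewal_coeff_def algebra_simps)
  qed
  have "(\<Sum>n. A n) * (\<Sum>n. B n) = stieltjes \<nu> z * denom \<beta> z"
    using \<open>z \<noteq> 0\<close> by (simp add: s D B w_def algebra_simps)
  also have "\<dots> = 1"
    using st[OF z(1)] denom_nonzero[OF z(1)] by simp
  finally have AB: "(\<Sum>n. A n) * (\<Sum>n. B n) = 1" .
  have conv: "(\<Sum>i\<le>k. A i * B (k - i)) =
      of_real (\<Sum>i\<le>k. (\<integral>x. x ^ i \<partial>\<nu>) * renewal_coeff \<beta> (k - i)) * w ^ k" for k
  proof -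
    have "A i * B (k - i) = of_real ((\<integral>x. x ^ i \<partial>\<nu>) * renewal_coeff \<beta> (k - i)) * w ^ k" if "i \<le> k" for i
      using that by (simp add: A_def B_def mult_ac flip: power_add)
    then show ?thesis
      by (simp add: sum_distrib_right)
  qed
  have "(\<lambda>k. \<Sum>i\<le>k. A i * B (k - i)) sums ((\<Sum>n. A n) * (\<Sum>n. B n))"
    by (rule Cauchy_product_sums[OF sA sB])
  then show ?thesis
    by (simp add: AB conv w_def)
qed

lemma moment_renewal_convolution:
  fixes \<nu> :: "real measure"
  assumes \<nu>: "real_distribution \<nu>" and supp: "AE x in \<nu>. \<bar>x\<bar> \<le> support_bound \<beta>"
    and st: "\<And>z. 0 < Im z \<Longrightarrow> stieltjes \<nu> z = 1 / denom \<beta> z"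
  shows "(\<Sum>i\<le>k. (\<integral>x. x ^ i \<partial>\<nu>) * renewal_coeff \<beta> (k - i)) = (if k = 0 then 1 else 0)"
proof -
  define R where "R = support_bound \<beta>"
  define E where "E = max 1 (exp \<beta>)"
  define d where "d k = (\<Sum>i\<le>k. (\<integral>x. x ^ i \<partial>\<nu>) * renewal_coeff \<beta> (k - i))" for k
  define c :: "nat \<Rightarrow> complex" where "c k = of_real (d k) - (if k = 0 then 1 else 0)" for k
  have R: "3 \<le> R"
    unfolding R_def support_bound_def using exp_gt_zero[of \<beta>] by linarith
  have d_bound: "\<bar>d k\<bar> \<le> E * (2 * R) ^ k" for k
  proof -
    have "\<bar>d k\<bar> \<le> (\<Sum>i\<le>k. R ^ k * E)"
      unfolding d_def
    proof (rule order.trans[OF sum_abs sum_mono])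
      fix i assume "i \<in> {..k}"
      then have "R ^ i \<le> R ^ k"
        using R by (intro power_increasing) auto
      then have "\<bar>\<integral>x. x ^ i \<partial>\<nu>\<bar> \<le> R ^ k"
        using moment_bound(2)[OF \<nu> supp, of i, folded R_def] by linarith
      then show "\<bar>(\<integral>x. x ^ i \<partial>\<nu>) * renewal_coeff \<beta> (k - i)\<bar> \<le> R ^ k * E"
        unfolding abs_mult E_def using abs_renewal_coeff_le R by (intro mult_mono) auto
    qed
    also have "\<dots> = real (Suc k) * (R ^ k * E)"
      by simp
    also have "\<dots> \<le> 2 ^ k * (R ^ k * E)"
    proof (rule mult_right_mono)
      have "Suc k \<le> 2 ^ k"
        by (rule Suc_leI[OF less_exp])
      then show "real (Suc k) \<le> 2 ^ k"
        by (metis of_nat_le_iff of_nat_numeral of_nat_power)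
    qed (use R in \<open>simp add: E_def\<close>)
    finally show ?thesis
      by (simp add: power_mult_distrib mult_ac)
  qed
  have c_bound: "norm (c k) \<le> (E + 1) * (2 * R) ^ k" for k
  proof -
    have "norm (c k) \<le> \<bar>d k\<bar> + 1"
      unfolding c_def using norm_triangle_ineq4[of "complex_of_real (d k)" "if k = 0 then 1 else 0"] by auto
    also have "\<dots> \<le> E * (2 * R) ^ k + (2 * R) ^ k"
      using d_bound[of k] one_le_power[of "2 * R" k] R by linarith
    finally show ?thesis
      by (simp add: algebra_simps)
  qed
  define z where "z j = of_real (2 * R + real j) * \<i>" for j
  define v where "v j = 1 / z j" for j
  have z: "0 < Im (z j)" "2 * support_bound \<beta> \<le> cmod (z j)" for j
    using R by (simp_all add: z_def R_def norm_mult del: of_real_add of_real_mult)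
  have v_lim: "v \<longlonglongrightarrow> 0"
  proof (rule tendsto_norm_zero_cancel)
    have "filterlim (\<lambda>j. 2 * R + real j) at_top sequentially"
      by (intro filterlim_tendsto_add_at_top[OF tendsto_const] filterlim_real_sequentially)
    then have "(\<lambda>j. 1 / (2 * R + real j)) \<longlonglongrightarrow> 0"
      by (intro tendsto_divide_0[OF tendsto_const] filterlim_at_top_imp_at_infinity)
    moreover have "norm (v j) = 1 / (2 * R + real j)" for j
      using R by (simp add: v_def z_def norm_divide norm_mult del: of_real_add of_real_mult)
    ultimately show "(\<lambda>j. norm (v j)) \<longlonglongrightarrow> 0"
      by simp
  qed
  have v_nonzero: "v j \<noteq> 0" for j
    using R by (simp add: v_def z_def del: of_real_add of_real_mult)
  have zero: "(\<Sum>k. c k * v j ^ k) = 0" for j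
  proof -
    have "(\<lambda>k. of_real (d k) * v j ^ k) sums 1"
      unfolding d_def v_def by (rule moment_renewal_convolution_sums[OF \<nu> supp st z])
    from sums_diff[OF this sums_single[of 0 "\<lambda>_. 1"]]
    have "(\<lambda>k. of_real (d k) * v j ^ k - (if k = 0 then 1 else 0)) sums 0"
      by simp
    moreover have "(\<lambda>k. of_real (d k) * v j ^ k - (if k = 0 then 1 else 0)) = (\<lambda>k. c k * v j ^ k)"
      by (auto simp: c_def fun_eq_iff algebra_simps)
    ultimately show ?thesis
      by (simp add: sums_iff)
  qed
  have summable: "summable (\<lambda>n. c n * w ^ n)" if "norm w < 1 / (2 * R)" for w
  proof (rule summable_norm_cancel, rule summable_comparison_test')
    have "2 * R * norm w < 1"
      using that R by (simp add: field_simps)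
    then show "summable (\<lambda>n. (E + 1) * (2 * R * norm w) ^ n)"
      using R by (intro summable_mult summable_geometric) simp
    show "norm (norm (c n * w ^ n)) \<le> (E + 1) * (2 * R * norm w) ^ n" for n
    proof -
      have "norm (c n) * norm w ^ n \<le> (E + 1) * (2 * R) ^ n * norm w ^ n"
        by (rule mult_right_mono[OF c_bound]) simp
      then show ?thesis
        by (simp add: norm_mult norm_power power_mult_distrib mult.assoc)
    qed
  qed
  have "c k = 0"
    by (rule powser_coeffs_zero_if_zero_along_sequence[where r="1 / (2 * R)", OF _ summable v_lim v_nonzero zero])
       (use R in simp)
  then have "of_real (d k) = (of_real (if k = 0 then 1 else 0) :: complex)"
    by (simp add: c_def)
  then show ?thesis
    unfolding d_def of_real_eq_iff .
qed

lemma moments_eq_partition_fn: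
  fixes \<nu> :: "real measure"
  assumes \<nu>: "real_distribution \<nu>" and supp: "AE x in \<nu>. \<bar>x\<bar> \<le> support_bound \<beta>"
    and st: "\<And>z. 0 < Im z \<Longrightarrow> stieltjes \<nu> z = 1 / denom \<beta> z"
  shows "(\<integral>x. x ^ N \<partial>\<nu>) = partition_fn mu \<beta> N"
proof (induction N rule: less_induct)
  case (less N)
  note conv = moment_renewal_convolution[OF \<nu> supp st, of N]
  show ?case
  proof (cases "N = 0")
    case True
    then show ?thesis
      using conv by (simp add: partition_fn_def renewal_coeff_def)
  next
    case False
    have "(\<Sum>i\<le>N. (\<integral>x. x ^ i \<partial>\<nu>) * renewal_coeff \<beta> (N - i)) =
        (\<integral>x. x ^ N \<partial>\<nu>) - (\<Sum>i<N. exp \<beta> * renewal_K mu (enat (N - i)) * (\<integral>x. x ^ i \<partial>\<nu>))"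
      by (simp add: lessThan_Suc_atMost[symmetric] renewal_coeff_def sum_negf mult_ac)
    then have "(\<integral>x. x ^ N \<partial>\<nu>) = (\<Sum>i<N. exp \<beta> * renewal_K mu (enat (N - i)) * (\<integral>x. x ^ i \<partial>\<nu>))"
      using conv False by simp
    also have "\<dots> = (\<Sum>i<N. exp \<beta> * renewal_K mu (enat (N - i)) * partition_fn mu \<beta> i)"
      using less.IH by simp
    also have "\<dots> = (\<Sum>n\<in>{1..N}. exp \<beta> * renewal_K mu (enat n) * partition_fn mu \<beta> (N - n))"
      by (rule sum.reindex_bij_witness[where i="\<lambda>n. N - n" and j="\<lambda>i. N - i"]) auto
    also have "\<dots> = partition_fn mu \<beta> N"
      using False by (simp add: partition_fn_recursion)
    finally show ?thesis .
  qed
qed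

lemma integral_kern_eq_stieltjes:
  assumes z: "0 < Im z"
  shows "(\<integral>x. kern z x \<partial>mu) = - z - z * (1 - z) * stieltjes mu (1 - z)"
proof -
  define g where "g x = 1 / (complex_of_real x - (1 - z))" for x
  have kern: "kern z x = - z + (- (z * (1 - z))) * g x" for x
  proof -
    have "1 - z - complex_of_real x \<noteq> 0"
      using kern_denom_nonzero z by simp
    moreover have "complex_of_real x - (1 - z) = - (1 - z - complex_of_real x)"
      by simp
    ultimately show ?thesis
      by (simp add: kern_def g_def field_simps)
  qed
  have "integrable mu g"
    unfolding g_def using z norm_inverse_real_minus_le[of "1 - z"]
    by (intro integrable_bounded_on_unit_interval[where B="1 / \<bar>Im z\<bar>"]) auto
  then have "(\<integral>x. kern z x \<partial>mu) = (\<integral>x. - z \<partial>mu) + (\<integral>x. (- (z * (1 - z))) * g x \<partial>mu)"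
    unfolding kern by (intro Bochner_Integration.integral_add) auto
  also have "\<dots> = - z + (- (z * (1 - z))) * (\<integral>x. g x \<partial>mu)"
    by (simp add: m.prob_space)
  also have "(\<integral>x. g x \<partial>mu) = stieltjes mu (1 - z)"
    unfolding stieltjes_def g_def ..
  finally show ?thesis
    by simp
qed

lemma inverse_denom_equation:
  assumes z: "0 < Im z"
  shows "1 / denom \<beta> z * (exp (complex_of_real \<beta>) * stieltjes mu (1 - z)
      - (1 - exp (complex_of_real \<beta>)) / (1 - z)) = 1 / (z * (1 - z))"
proof -
  have "z \<noteq> 0" "1 - z \<noteq> 0"
    using z by (auto simp: complex_eq_iff)
  moreover have "exp (complex_of_real \<beta>) * stieltjes mu (1 - z) - (1 - exp (complex_of_real \<beta>)) / (1 - z) =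
      denom \<beta> z / (z * (1 - z))"
    using calculation by (simp add: denom_def integral_kern_eq_stieltjes[OF z] field_simps)
  ultimately show ?thesis
    using denom_nonzero[OF z] by simp
qed

end

theorem theorem3:
  fixes mu :: "real measure" and \<beta> :: real
  assumes "prob_space mu"
    and "sets mu = sets borel"
    and "emeasure mu {0..1} = 1"
  shows "\<exists>\<nu> :: real measure. prob_space \<nu> \<and> sets \<nu> = sets borel \<and>
     (\<forall>z. Im z > 0 \<longrightarrow>
        stieltjes \<nu> z * (exp (complex_of_real \<beta>) * stieltjes mu (1 - z)
                           - (1 - exp (complex_of_real \<beta>)) / (1 - z))
        = 1 / (z * (1 - z))) \<and>
     (\<forall>z. Im z > 0 \<longrightarrow>
        stieltjes \<nu> z = inverse (- z - exp (complex_of_real \<beta>) *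
           (\<integral>x. z * complex_of_real x / (1 - z - complex_of_real x) \<partial>mu))) \<and>
     (\<forall>N::nat. integrable \<nu> (\<lambda>x. x ^ N) \<and>
        partition_fn mu \<beta> N = (\<integral>x. x ^ N \<partial>\<nu>))"
proof -
  interpret unit_interval_prob mu
    by (rule unit_interval_prob.intro[OF assms])
  obtain \<nu> where \<nu>: "real_distribution \<nu>" and supp: "AE x in \<nu>. \<bar>x\<bar> \<le> support_bound \<beta>"
    and st: "\<And>z. 0 < Im z \<Longrightarrow> stieltjes \<nu> z = 1 / denom \<beta> z"
    using stieltjes_eq_inverse_denom_exists[of \<beta>] by blast
  interpret \<nu>: real_distribution \<nu> by (fact \<nu>)
  show ?thesis
  proof (intro exI[of _ \<nu>] conjI allI impI)
    show "prob_space \<nu>" "sets \<nu> = sets borel"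
      by (fact \<nu>.prob_space_axioms \<nu>.events_eq_borel)+
  next
    fix z :: complex assume z: "0 < Im z"
    show "stieltjes \<nu> z * (exp (complex_of_real \<beta>) * stieltjes mu (1 - z)
        - (1 - exp (complex_of_real \<beta>)) / (1 - z)) = 1 / (z * (1 - z))"
      using inverse_denom_equation[OF z] by (simp only: st[OF z])
  next
    fix z :: complex assume z: "0 < Im z"
    show "stieltjes \<nu> z = inverse (- z - exp (complex_of_real \<beta>) *
        (\<integral>x. z * complex_of_real x / (1 - z - complex_of_real x) \<partial>mu))"
      unfolding st[OF z] denom_def kern_def by (simp add: inverse_eq_divide)
  next
    fix N
    show "integrable \<nu> (\<lambda>x. x ^ N)"
      by (rule moment_bound(1)[OF \<nu> supp])
    show "partition_fn mu \<beta> N = (\<integral>x. x ^ N \<partial>\<nu>)"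
      by (rule moments_eq_partition_fn[OF \<nu> supp st, symmetric])
  qed
qed

end
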